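(* Let $(\mathcal{T},\mathcal{F},\mathcal{S})$ be a tree of fusion systems satisfying $(H)$ with completion $\mathcal{F}_\mathcal{T}$ on $S=\mathcal{S}(v_* )$, and assume (a) $\mathcal{F}(v)$ is saturated for every vertex $v$, and (b) $\mathcal{F}(e)=\mathcal{F}_{\mathcal{S}(e)}(\mathcal{S}(e))$ for every edge $e$. Let $P\trianglelefteq Q\le S$ with $P$ $\mathcal{F}_\mathcal{T}$-centric. If $\operatorname{Rep}_{\mathcal{F}_\mathcal{T}}(P,\mathcal{F})$ is a tree, then the image of the restriction map $\operatorname{res}^Q_P:\operatorname{Rep}_{\mathcal{F}_\mathcal{T}}(Q,\mathcal{F})\to\operatorname{Rep}_{\mathcal{F}_\mathcal{T}}(P,\mathcal{F})$ equals the subgraph $\operatorname{Rep}_{\mathcal{F}_\mathcal{T}}(P,\mathcal{F})^{\operatorname{Aut}_Q(P)}$ fixed by $\operatorname{Aut}_Q(P)$.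
   Context: Maps act on the right; $\alpha\circ\beta$ means first $\alpha$ then $\beta$. Trees of fusion systems, Hypothesis $(H)$ (there is a vertex $v_*$ such that for each vertex $v\ne v_*$ the edge $e$ at $v$ on the path to $v_*$ has $\mathcal{S}(f_{ev}):\mathcal{S}(e)\to\mathcal{S}(v)$ an isomorphism), the identification of all $\mathcal{S}(v),\mathcal{S}(e)$ with subgroups of $S$, and the completion $\mathcal{F}_\mathcal{T}$ (smallest fusion system on $S$ containing all $\mathcal{F}(v)$) are as follows: a tree of fusion systems consists of a finite tree $\mathcal{T}$, finite $p$-groups $\mathcal{S}(v),\mathcal{S}(e)$, fusion systems $\mathcal{F}(v)$ on $\mathcal{S}(v)$, $\mathcal{F}(e)$ on $\mathcal{S}(e)$, and for $v$ incident on $e$ a monomorphism $\mathcal{S}(f_{ev})$ which is an injective morphism of fusion systems $\mathcal{F}(e)\to\mathcal{F}(v)$. $\mathcal{F}_S(S)$ denotes the fusion system whose morphisms are conjugations by elements of $S$. $P$ is $\mathcal{F}$-centric if $C_S(P\varphi)=Z(P\varphi)$ for all $\varphi\in\operatorname{Hom}_\mathcal{F}(P,S)$. Saturation is the standard notion: every fully normalised subgroup is fully centralised and fully automised, and each $\varphi\in\operatorname{Hom}_\mathcal{F}(P,S)$ with $P\varphi$ fully centralised extends to $N_\varphi=\{g\in N_S(P)\mid \varphi^{-1}c_g\varphi\in\operatorname{Aut}_S(P\varphi)\}$. $\operatorname{Rep}_{\mathcal{F}_\mathcal{T}}(P,\mathcal{F})$: vertices are classes $[\alpha]_{\mathcal{F}(v)}$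 of $\alpha\in\operatorname{Hom}_{\mathcal{F}_\mathcal{T}}(P,\mathcal{S}(v))$ where $\alpha\sim\beta$ iff $\alpha\circ\gamma=\beta$ for some $\gamma\in\operatorname{Iso}_{\mathcal{F}(v)}(P\alpha,P\beta)$; edges are classes $[\gamma]_{\mathcal{F}(e)}$ of $\gamma\in\operatorname{Hom}_{\mathcal{F}_\mathcal{T}}(P,\mathcal{S}(e))$ defined similarly with $\mathcal{F}(e)$; the edge $[\gamma]_{\mathcal{F}(e)}$, $e=(v,w)$, joins $[\gamma\circ\iota_{\mathcal{S}(e)}^{\mathcal{S}(v)}]_{\mathcal{F}(v)}$ and $[\gamma\circ\iota_{\mathcal{S}(e)}^{\mathcal{S}(w)}]_{\mathcal{F}(w)}$. The restriction map $\operatorname{res}^Q_P$ sends $[\varphi]_{\mathcal{F}(x)}\mapsto[\varphi|_P]_{\mathcal{F}(x)}$ ($x$ a vertex or edge); it is a graph homomorphism. $\operatorname{Aut}_{\mathcal{F}_\mathcal{T}}(P)$ (hence its subgroup $\operatorname{Aut}_Q(P)$ of conjugations by elements of $Q$) acts on $\operatorname{Rep}_{\mathcal{F}_\mathcal{T}}(P,\mathcal{F})$ by $\psi\cdot[\varphi]_{\mathcal{F}(x)}=[\psi\circ\varphi]_{\mathcal{F}(x)}$. *)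

theory Defs
  imports "HOL-Algebra.Algebra" "HOL-Library.FuncSet"
begin

definition ugraph :: "'v set \<Rightarrow> 'e set \<Rightarrow> ('e \<Rightarrow> 'v set) \<Rightarrow> bool" where
  "ugraph V E ends \<longleftrightarrow> (\<forall>e\<in>E. \<exists>u w. u \<in> V \<and> w \<in> V \<and> u \<noteq> w \<and> ends e = {u, w})"

definition upath :: "'v set \<Rightarrow> 'e set \<Rightarrow> ('e \<Rightarrow> 'v set) \<Rightarrow> 'v list \<Rightarrow> 'e list \<Rightarrow> bool" where
  "upath V E ends vs es \<longleftrightarrow> vs \<noteq> [] \<and> length vs = Suc (length es) \<and> distinct vs \<and>
     set vs \<subseteq> V \<and> set es \<subseteq> E \<and> (\<forall>i<length es. ends (es ! i) = {vs ! i, vs ! Suc i})"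

text \<open>A cycle: a path with at least two vertices closed up by a further edge
  (so two parallel edges form a cycle, as usual for multigraphs).\<close>
definition ucycle :: "'v set \<Rightarrow> 'e set \<Rightarrow> ('e \<Rightarrow> 'v set) \<Rightarrow> 'v list \<Rightarrow> 'e list \<Rightarrow> 'e \<Rightarrow> bool" where
  "ucycle V E ends vs es e \<longleftrightarrow> upath V E ends vs es \<and> 2 \<le> length vs \<and> e \<in> E \<and> e \<notin> set es \<and>
     ends e = {last vs, hd vs}"

definition uconnected :: "'v set \<Rightarrow> 'e set \<Rightarrow> ('e \<Rightarrow> 'v set) \<Rightarrow> bool" where
  "uconnected V E ends \<longleftrightarrow>
     (\<forall>u\<in>V. \<forall>w\<in>V. \<exists>vs es. upath V E ends vs es \<and> hd vs = u \<and> last vs = w)"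

definition utree :: "'v set \<Rightarrow> 'e set \<Rightarrow> ('e \<Rightarrow> 'v set) \<Rightarrow> bool" where
  "utree V E ends \<longleftrightarrow> ugraph V E ends \<and> V \<noteq> {} \<and> uconnected V E ends \<and>
     \<not> (\<exists>vs es e. ucycle V E ends vs es e)"

section \<open>Fusion systems (maps act on the right; composition "first alpha then beta")\<close>

text \<open>A morphism of a fusion system is a triple (P, Q, phi): phi an injective
  homomorphism P -> Q, stored as an extensional function on P.\<close>
type_synonym 'g fus = "('g set \<times> 'g set \<times> ('g \<Rightarrow> 'g)) set"

definition conjm :: "('g, 'b) monoid_scheme \<Rightarrow> 'g \<Rightarrow> 'g \<Rightarrow> 'g" where
  "conjm G g = (\<lambda>x. inv\<^bsub>G\<^esub> g \<otimes>\<^bsub>G\<^esub> x \<otimes>\<^bsub>G\<^esub> g)"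

definition sgrp :: "('g, 'b) monoid_scheme \<Rightarrow> 'g set \<Rightarrow> 'g set \<Rightarrow> bool" where
  "sgrp G S P \<longleftrightarrow> subgroup P G \<and> P \<subseteq> S"

definition injhom :: "('g, 'b) monoid_scheme \<Rightarrow> 'g set \<Rightarrow> 'g set \<Rightarrow> ('g \<Rightarrow> 'g) \<Rightarrow> bool" where
  "injhom G P Q \<phi> \<longleftrightarrow> \<phi> \<in> extensional P \<and> \<phi> \<in> P \<rightarrow> Q \<and> inj_on \<phi> P \<and>
     (\<forall>x\<in>P. \<forall>y\<in>P. \<phi> (x \<otimes>\<^bsub>G\<^esub> y) = \<phi> x \<otimes>\<^bsub>G\<^esub> \<phi> y)"

definition Hom :: "'g fus \<Rightarrow> 'g set \<Rightarrow> 'g set \<Rightarrow> ('g \<Rightarrow> 'g) set" where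
  "Hom F P Q = {\<phi>. (P, Q, \<phi>) \<in> F}"

definition FS :: "('g, 'b) monoid_scheme \<Rightarrow> 'g set \<Rightarrow> 'g fus" where
  "FS G S = {(P, Q, \<phi>). sgrp G S P \<and> sgrp G S Q \<and>
     (\<exists>g\<in>S. conjm G g ` P \<subseteq> Q \<and> \<phi> = restrict (conjm G g) P)}"

definition fusion_system :: "('g, 'b) monoid_scheme \<Rightarrow> 'g set \<Rightarrow> 'g fus \<Rightarrow> bool" where
  "fusion_system G S F \<longleftrightarrow>
     (\<forall>(P, Q, \<phi>)\<in>F. sgrp G S P \<and> sgrp G S Q \<and> injhom G P Q \<phi>) \<and>
     FS G S \<subseteq> F \<and>
     (\<forall>P Q R \<phi> \<psi>. (P, Q, \<phi>) \<in> F \<and> (Q, R, \<psi>) \<in> F \<longrightarrow> (P, R, compose P \<psi> \<phi>) \<in> F) \<and>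
     (\<forall>(P, Q, \<phi>)\<in>F. (P, \<phi> ` P, \<phi>) \<in> F \<and> (\<phi> ` P, P, restrict (inv_into P \<phi>) (\<phi> ` P)) \<in> F)"

definition normalizer_in :: "('g, 'b) monoid_scheme \<Rightarrow> 'g set \<Rightarrow> 'g set \<Rightarrow> 'g set" where
  "normalizer_in G S P = {g \<in> S. conjm G g ` P = P}"

definition centralizer_in :: "('g, 'b) monoid_scheme \<Rightarrow> 'g set \<Rightarrow> 'g set \<Rightarrow> 'g set" where
  "centralizer_in G S P = {g \<in> S. \<forall>x\<in>P. g \<otimes>\<^bsub>G\<^esub> x = x \<otimes>\<^bsub>G\<^esub> g}"

definition center_of :: "('g, 'b) monoid_scheme \<Rightarrow> 'g set \<Rightarrow> 'g set" where
  "center_of G P = centralizer_in G P P"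

definition AutX :: "('g, 'b) monoid_scheme \<Rightarrow> 'g set \<Rightarrow> 'g set \<Rightarrow> ('g \<Rightarrow> 'g) set" where
  "AutX G H P = (\<lambda>g. restrict (conjm G g) P) ` normalizer_in G H P"

definition fully_normalised :: "('g, 'b) monoid_scheme \<Rightarrow> 'g set \<Rightarrow> 'g fus \<Rightarrow> 'g set \<Rightarrow> bool" where
  "fully_normalised G S F P \<longleftrightarrow>
     (\<forall>\<phi>\<in>Hom F P S. card (normalizer_in G S (\<phi> ` P)) \<le> card (normalizer_in G S P))"

definition fully_centralised :: "('g, 'b) monoid_scheme \<Rightarrow> 'g set \<Rightarrow> 'g fus \<Rightarrow> 'g set \<Rightarrow> bool" where
  "fully_centralised G S F P \<longleftrightarrow>
     (\<forall>\<phi>\<in>Hom F P S. card (centralizer_in G S (\<phi> ` P)) \<le> card (centralizer_in G S P))"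

text \<open>Aut_S(P) is a Sylow p-subgroup of Aut_F(P).\<close>
definition fully_automised :: "nat \<Rightarrow> ('g, 'b) monoid_scheme \<Rightarrow> 'g set \<Rightarrow> 'g fus \<Rightarrow> 'g set \<Rightarrow> bool" where
  "fully_automised p G S F P \<longleftrightarrow>
     AutX G S P \<subseteq> Hom F P P \<and>
     card (AutX G S P) = p ^ multiplicity p (card (Hom F P P))"

definition N_phi :: "('g, 'b) monoid_scheme \<Rightarrow> 'g set \<Rightarrow> 'g set \<Rightarrow> ('g \<Rightarrow> 'g) \<Rightarrow> 'g set" where
  "N_phi G S P \<phi> = {g \<in> normalizer_in G S P.
     restrict (\<lambda>y. \<phi> (conjm G g (inv_into P \<phi> y))) (\<phi> ` P) \<in> AutX G S (\<phi> ` P)}"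

definition saturated :: "nat \<Rightarrow> ('g, 'b) monoid_scheme \<Rightarrow> 'g set \<Rightarrow> 'g fus \<Rightarrow> bool" where
  "saturated p G S F \<longleftrightarrow> fusion_system G S F \<and>
     (\<forall>P. sgrp G S P \<and> fully_normalised G S F P \<longrightarrow>
          fully_centralised G S F P \<and> fully_automised p G S F P) \<and>
     (\<forall>P \<phi>. \<phi> \<in> Hom F P S \<and> fully_centralised G S F (\<phi> ` P) \<longrightarrow>
          (\<exists>\<psi>\<in>Hom F (N_phi G S P \<phi>) S. restrict \<psi> P = \<phi>))"

definition centric :: "('g, 'b) monoid_scheme \<Rightarrow> 'g set \<Rightarrow> 'g fus \<Rightarrow> 'g set \<Rightarrow> bool" where
  "centric G S F P \<longleftrightarrow>
     (\<forall>\<phi>\<in>Hom F P S. centralizer_in G S (\<phi> ` P) = center_of G (\<phi> ` P))"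

section \<open>Trees of fusion systems (all S(v), S(e) identified with subgroups of S)\<close>

definition completion :: "('g, 'b) monoid_scheme \<Rightarrow> 'g set \<Rightarrow> 'v set \<Rightarrow> ('v \<Rightarrow> 'g fus) \<Rightarrow> 'g fus" where
  "completion G S V Fv = \<Inter> {F. fusion_system G S F \<and> (\<forall>v\<in>V. Fv v \<subseteq> F)}"

definition cls :: "'g fus \<Rightarrow> 'g fus \<Rightarrow> 'g set \<Rightarrow> 'g set \<Rightarrow> ('g \<Rightarrow> 'g) \<Rightarrow> ('g \<Rightarrow> 'g) set" where
  "cls FT Fx P T \<alpha> = {\<beta>. (P, T, \<beta>) \<in> FT \<and>
     (\<exists>\<gamma>. (\<alpha> ` P, \<beta> ` P, \<gamma>) \<in> Fx \<and> bij_betw \<gamma> (\<alpha> ` P) (\<beta> ` P) \<and> \<beta> = compose P \<gamma> \<alpha>)}"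

text \<open>Vertices (I = V) resp. edges (I = E) of Rep_{F_T}(P, F): pairs (x, [alpha]_{F(x)}).\<close>
definition rep_nodes :: "'g fus \<Rightarrow> ('i \<Rightarrow> 'g fus) \<Rightarrow> ('i \<Rightarrow> 'g set) \<Rightarrow> 'i set \<Rightarrow> 'g set
    \<Rightarrow> ('i \<times> ('g \<Rightarrow> 'g) set) set" where
  "rep_nodes FT F T I P = {(i, cls FT (F i) P (T i) \<alpha>) | i \<alpha>. i \<in> I \<and> (P, T i, \<alpha>) \<in> FT}"

text \<open>The edge [gamma]_{F(e)} joins [gamma o incl]_{F(v)} for the two ends v of e.\<close>
definition rep_ends :: "'g fus \<Rightarrow> ('v \<Rightarrow> 'g fus) \<Rightarrow> ('v \<Rightarrow> 'g set) \<Rightarrow> ('e \<Rightarrow> 'v set) \<Rightarrow> 'g set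
    \<Rightarrow> 'e \<times> ('g \<Rightarrow> 'g) set \<Rightarrow> ('v \<times> ('g \<Rightarrow> 'g) set) set" where
  "rep_ends FT Fv Sv ends P x =
     (\<lambda>v. (v, cls FT (Fv v) P (Sv v) (SOME \<gamma>. \<gamma> \<in> snd x))) ` ends (fst x)"

definition rep_res :: "'g fus \<Rightarrow> ('i \<Rightarrow> 'g fus) \<Rightarrow> ('i \<Rightarrow> 'g set) \<Rightarrow> 'g set
    \<Rightarrow> 'i \<times> ('g \<Rightarrow> 'g) set \<Rightarrow> 'i \<times> ('g \<Rightarrow> 'g) set" where
  "rep_res FT F T P x =
     (fst x, cls FT (F (fst x)) P (T (fst x)) (restrict (SOME \<phi>. \<phi> \<in> snd x) P))"

definition rep_act :: "'g fus \<Rightarrow> ('i \<Rightarrow> 'g fus) \<Rightarrow> ('i \<Rightarrow> 'g set) \<Rightarrow> 'g set \<Rightarrow> ('g \<Rightarrow> 'g)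
    \<Rightarrow> 'i \<times> ('g \<Rightarrow> 'g) set \<Rightarrow> 'i \<times> ('g \<Rightarrow> 'g) set" where
  "rep_act FT F T P \<psi> x =
     (fst x, cls FT (F (fst x)) P (T (fst x)) (compose P (SOME \<phi>. \<phi> \<in> snd x) \<psi>))"

definition AutQ :: "('g, 'b) monoid_scheme \<Rightarrow> 'g set \<Rightarrow> 'g set \<Rightarrow> ('g \<Rightarrow> 'g) set" where
  "AutQ G Q P = (\<lambda>g. restrict (conjm G g) P) ` Q"

definition rep_fixed :: "'g fus \<Rightarrow> ('i \<Rightarrow> 'g fus) \<Rightarrow> ('i \<Rightarrow> 'g set) \<Rightarrow> 'i set \<Rightarrow> 'g set
    \<Rightarrow> ('g \<Rightarrow> 'g) set \<Rightarrow> ('i \<times> ('g \<Rightarrow> 'g) set) set" where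
  "rep_fixed FT F T I P A = {x \<in> rep_nodes FT F T I P. \<forall>\<psi>\<in>A. rep_act FT F T P \<psi> x = x}"

end

theory Submission
  imports Defs
begin

text \<open>
  Restrictions of maps defined on Q are fixed by Aut_Q(P): an element g of Q acts on the class
  of \<phi>|P through the conjugation by \<phi> g. Conversely, Aut_Q(P) acts on the tree Rep(P) by
  graph automorphisms, so it fixes the unique path from the restriction of the inclusion of Q
  into S(v_*) to any fixed vertex, and we walk along that path. Across a fixed edge
  [\<gamma>]_F(e), hypothesis (b) makes each conjugation by q \<in> Q on P correspond under \<gamma> to a
  conjugation by some s \<in> S(e); saturation of F(v) then extends \<gamma> to Q, and centricity of P
  forces the image of the extension into S(e), so the edge and its other end lie in the image
  of the restriction map.
\<close>

subsection \<open>Injective homomorphisms and conjugation\<close>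

lemma injhomD:
  assumes "injhom G P Q \<phi>"
  shows "\<phi> \<in> extensional P" "\<phi> \<in> P \<rightarrow> Q" "inj_on \<phi> P"
    "\<And>x y. x \<in> P \<Longrightarrow> y \<in> P \<Longrightarrow> \<phi> (x \<otimes>\<^bsub>G\<^esub> y) = \<phi> x \<otimes>\<^bsub>G\<^esub> \<phi> y"
  using assms unfolding injhom_def by simp_all

lemma injhom_image_subset: "injhom G P Q \<phi> \<Longrightarrow> \<phi> ` P \<subseteq> Q"
  using injhomD(2) by blast

lemma injhom_codomain: "injhom G P Q \<phi> \<Longrightarrow> \<phi> ` P \<subseteq> R \<Longrightarrow> injhom G P R \<phi>"
  unfolding injhom_def by auto

lemma sgrp_carrier: "sgrp G S P \<Longrightarrow> P \<subseteq> carrier G"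
  unfolding sgrp_def using subgroup.subset by blast

lemma sgrp_mono: "sgrp G S P \<Longrightarrow> S \<subseteq> S' \<Longrightarrow> sgrp G S' P"
  unfolding sgrp_def by blast

context group
begin

lemma injhom_mem:
  assumes "injhom G P Q \<phi>" "subgroup Q G" "x \<in> P"
  shows "\<phi> x \<in> Q" "\<phi> x \<in> carrier G"
  using injhomD(2)[OF assms(1)] assms(3) subgroup.mem_carrier[OF assms(2)] by auto

lemma injhom_one:
  assumes "injhom G P Q \<phi>" "subgroup P G" "subgroup Q G"
  shows "\<phi> \<one> = \<one>"
proof -
  have "\<one> \<in> P" using assms(2) by (rule subgroup.one_closed)
  then have "\<phi> \<one> = \<phi> \<one> \<otimes> \<phi> \<one>" "\<phi> \<one> \<in> carrier G"
    using injhomD(4)[OF assms(1)] injhom_mem[OF assms(1,3)] by (metis l_one one_closed)+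
  then show ?thesis by simp
qed

lemma injhom_inv:
  assumes "injhom G P Q \<phi>" "subgroup P G" "subgroup Q G" "x \<in> P"
  shows "\<phi> (inv x) = inv (\<phi> x)"
proof -
  have ix: "inv x \<in> P" using assms(2,4) by (rule subgroup.m_inv_closed)
  have "\<phi> (inv x) \<otimes> \<phi> x = \<phi> (inv x \<otimes> x)" using injhomD(4)[OF assms(1) ix assms(4)] by simp
  also have "\<dots> = \<one>"
    using subgroup.mem_carrier[OF assms(2,4)] injhom_one[OF assms(1-3)] by simp
  finally show ?thesis
    using injhom_mem[OF assms(1,3)] ix assms(4) by (simp add: inv_equality)
qed

lemma injhom_conjm:
  assumes "injhom G P Q \<phi>" "subgroup P G" "subgroup Q G" "x \<in> P" "g \<in> P"
  shows "\<phi> (conjm G g x) = conjm G (\<phi> g) (\<phi> x)"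
proof -
  have ig: "inv g \<in> P" using assms(2,5) by (rule subgroup.m_inv_closed)
  then have "inv g \<otimes> x \<in> P" using assms(2,4) by (simp add: subgroup.m_closed)
  then have "\<phi> (inv g \<otimes> x \<otimes> g) = \<phi> (inv g) \<otimes> \<phi> x \<otimes> \<phi> g"
    using injhomD(4)[OF assms(1)] ig assms(4,5) by simp
  then show ?thesis unfolding conjm_def using injhom_inv[OF assms(1-3,5)] by simp
qed

lemma injhom_image_subgroup:
  assumes "injhom G P Q \<phi>" "subgroup P G" "subgroup Q G"
  shows "subgroup (\<phi> ` P) G"
proof (rule subgroupI)
  show "\<phi> ` P \<subseteq> carrier G" using injhom_mem[OF assms(1,3)] by blast
  show "\<phi> ` P \<noteq> {}" using subgroup.one_closed[OF assms(2)] by blast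
  fix a b assume "a \<in> \<phi> ` P" "b \<in> \<phi> ` P"
  then obtain x y where x: "x \<in> P" "a = \<phi> x" and y: "y \<in> P" "b = \<phi> y" by blast
  show "inv a \<in> \<phi> ` P"
    using x injhom_inv[OF assms x(1)] subgroup.m_inv_closed[OF assms(2) x(1)] by (metis image_eqI)
  show "a \<otimes> b \<in> \<phi> ` P"
    using x y injhomD(4)[OF assms(1) x(1) y(1)] subgroup.m_closed[OF assms(2) x(1) y(1)]
    by (metis image_eqI)
qed

lemma injhom_compose:
  assumes "injhom G P Q \<phi>" "injhom G Q R \<psi>" "subgroup P G"
  shows "injhom G P R (compose P \<psi> \<phi>)"
  unfolding injhom_def
proof (intro conjI ballI)
  show "compose P \<psi> \<phi> \<in> extensional P" by (rule compose_extensional)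
  show "compose P \<psi> \<phi> \<in> P \<rightarrow> R"
    using injhomD(2)[OF assms(1)] injhomD(2)[OF assms(2)] by (rule funcset_compose)
  have "inj_on (\<psi> \<circ> \<phi>) P"
    using injhomD(3)[OF assms(1)] inj_on_subset[OF injhomD(3)[OF assms(2)] injhom_image_subset[OF assms(1)]]
    by (rule comp_inj_on)
  then show "inj_on (compose P \<psi> \<phi>) P"
    by (rule inj_on_cong[THEN iffD1, rotated]) (simp add: compose_def)
  fix x y assume x: "x \<in> P" and y: "y \<in> P"
  have "\<phi> x \<in> Q" "\<phi> y \<in> Q" using injhomD(2)[OF assms(1)] x y by auto
  then show "compose P \<psi> \<phi> (x \<otimes> y) = compose P \<psi> \<phi> x \<otimes> compose P \<psi> \<phi> y"
    using x y subgroup.m_closed[OF assms(3) x y] injhomD(4)[OF assms(1) x y] injhomD(4)[OF assms(2)]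
    by (simp add: compose_def)
qed

lemma injhom_inv_into:
  assumes "injhom G P Q \<phi>" "subgroup P G"
  shows "injhom G (\<phi> ` P) P (restrict (inv_into P \<phi>) (\<phi> ` P))"
  unfolding injhom_def
proof (intro conjI ballI)
  have inj: "inj_on \<phi> P" by (rule injhomD(3)[OF assms(1)])
  show "restrict (inv_into P \<phi>) (\<phi> ` P) \<in> extensional (\<phi> ` P)" by simp
  show "restrict (inv_into P \<phi>) (\<phi> ` P) \<in> \<phi> ` P \<rightarrow> P" by (auto simp: inv_into_into)
  show "inj_on (restrict (inv_into P \<phi>) (\<phi> ` P)) (\<phi> ` P)"
    using inj_on_inv_into[of "\<phi> ` P" \<phi> P] by (simp add: inj_on_def)
  fix a b assume "a \<in> \<phi> ` P" "b \<in> \<phi> ` P"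
  then obtain x y where x: "x \<in> P" "a = \<phi> x" and y: "y \<in> P" "b = \<phi> y" by blast
  have "x \<otimes> y \<in> P" using subgroup.m_closed[OF assms(2) x(1) y(1)] .
  moreover have "a \<otimes> b = \<phi> (x \<otimes> y)" using x y injhomD(4)[OF assms(1) x(1) y(1)] by simp
  ultimately show "restrict (inv_into P \<phi>) (\<phi> ` P) (a \<otimes> b) =
      restrict (inv_into P \<phi>) (\<phi> ` P) a \<otimes> restrict (inv_into P \<phi>) (\<phi> ` P) b"
    using x y inj by (simp add: inv_into_f_f)
qed

lemma conjm_one: "x \<in> carrier G \<Longrightarrow> conjm G \<one> x = x"
  unfolding conjm_def by simp

lemma conjm_conjm_inv: "g \<in> carrier G \<Longrightarrow> x \<in> carrier G \<Longrightarrow> conjm G g (conjm G (inv g) x) = x"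
  unfolding conjm_def by (simp add: m_assoc flip: m_assoc[of "inv g" g])

lemma conjm_eq_imp_commute:
  assumes "t \<in> carrier G" "s \<in> carrier G" "y \<in> carrier G" "conjm G t y = conjm G s y"
  shows "(t \<otimes> inv s) \<otimes> y = y \<otimes> (t \<otimes> inv s)"
proof -
  have "t \<otimes> (inv t \<otimes> y \<otimes> t) \<otimes> inv s = t \<otimes> (inv s \<otimes> y \<otimes> s) \<otimes> inv s"
    using assms(4) unfolding conjm_def by simp
  then show ?thesis
    using assms(1-3) by (simp add: m_assoc flip: m_assoc[of t "inv t"])
qed

lemma injhom_restrict_conjm:
  assumes "g \<in> carrier G" "subgroup P G" "conjm G g ` P \<subseteq> Q"
  shows "injhom G P Q (restrict (conjm G g) P)"
  unfolding injhom_def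
proof (intro conjI ballI)
  have c: "P \<subseteq> carrier G" using subgroup.subset[OF assms(2)] .
  show "restrict (conjm G g) P \<in> extensional P" by simp
  show "restrict (conjm G g) P \<in> P \<rightarrow> Q" using assms(3) by auto
  show "inj_on (restrict (conjm G g) P) P"
    by (rule inj_onI) (use c assms(1) in \<open>auto simp: conjm_def subset_iff\<close>)
  fix x y assume x: "x \<in> P" and y: "y \<in> P"
  have "inv g \<otimes> x \<otimes> g \<otimes> (inv g \<otimes> y \<otimes> g) = inv g \<otimes> (x \<otimes> y) \<otimes> g"
    using x y c assms(1) by (simp add: subset_iff m_assoc flip: m_assoc[of g "inv g"])
  then show "restrict (conjm G g) P (x \<otimes> y) = restrict (conjm G g) P x \<otimes> restrict (conjm G g) P y"
    using x y subgroup.m_closed[OF assms(2) x y] by (simp add: conjm_def)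
qed

lemma image_conjm_comp:
  assumes "\<And>x. x \<in> P \<Longrightarrow> \<phi> (conjm G q x) = conjm G s (\<phi> x)" "conjm G q ` P = P"
  shows "conjm G s ` \<phi> ` P = \<phi> ` P"
proof -
  have "(conjm G s \<circ> \<phi>) ` P = (\<phi> \<circ> conjm G q) ` P" by (rule image_cong) (simp_all add: assms(1))
  then have "conjm G s ` \<phi> ` P = \<phi> ` conjm G q ` P" by (simp add: image_comp)
  then show ?thesis using assms(2) by simp
qed

lemma center_of_image_subset:
  assumes "injhom G P Q \<psi>" "subgroup P G"
  shows "center_of G (\<psi> ` P) \<subseteq> \<psi> ` center_of G P"
proof
  fix z assume z: "z \<in> center_of G (\<psi> ` P)"
  then obtain x where x: "x \<in> P" "z = \<psi> x" unfolding center_of_def centralizer_in_def by blast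
  have "x \<otimes> y = y \<otimes> x" if y: "y \<in> P" for y
  proof -
    have "\<psi> (x \<otimes> y) = \<psi> (y \<otimes> x)"
      using z x y injhomD(4)[OF assms(1)] unfolding center_of_def centralizer_in_def by auto
    then show ?thesis
      using injhomD(3)[OF assms(1)] subgroup.m_closed[OF assms(2)] x y by (meson inj_on_def)
  qed
  then show "z \<in> \<psi> ` center_of G P" using x unfolding center_of_def centralizer_in_def by blast
qed

end

subsection \<open>Fusion systems\<close>

context group
begin

lemma fusion_system_mor:
  assumes "fusion_system G S F" "(P, Q, \<phi>) \<in> F"
  shows "sgrp G S P" "sgrp G S Q" "injhom G P Q \<phi>"
  using assms unfolding fusion_system_def by fastforce+

lemma fusion_system_compose:
  assumes "fusion_system G S F" "(P, Q, \<phi>) \<in> F" "(Q, R, \<psi>) \<in> F"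
  shows "(P, R, compose P \<psi> \<phi>) \<in> F"
  using assms unfolding fusion_system_def by blast

lemma fusion_system_FS: "fusion_system G S F \<Longrightarrow> FS G S \<subseteq> F"
  unfolding fusion_system_def by blast

lemma fusion_system_onto_image:
  assumes "fusion_system G S F" "(P, Q, \<phi>) \<in> F"
  shows "(P, \<phi> ` P, \<phi>) \<in> F"
  using assms unfolding fusion_system_def by fastforce

lemma fusion_system_inv_into:
  assumes "fusion_system G S F" "(P, Q, \<phi>) \<in> F"
  shows "(\<phi> ` P, P, restrict (inv_into P \<phi>) (\<phi> ` P)) \<in> F"
  using assms unfolding fusion_system_def by fastforce

lemma fusion_system_image_sgrp:
  assumes "fusion_system G S F" "(P, Q, \<phi>) \<in> F"
  shows "sgrp G S (\<phi> ` P)"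
  using fusion_system_mor(2)[OF assms(1) fusion_system_onto_image[OF assms]] .

lemma fusion_system_image_subset:
  assumes "fusion_system G S F" "(P, Q, \<phi>) \<in> F"
  shows "\<phi> ` P \<subseteq> Q"
  using injhom_image_subset[OF fusion_system_mor(3)[OF assms]] .

lemma fusion_system_extensional:
  assumes "fusion_system G S F" "(P, Q, \<phi>) \<in> F"
  shows "\<phi> \<in> extensional P"
  using injhomD(1)[OF fusion_system_mor(3)[OF assms]] .

lemma fusion_system_conjm:
  assumes "fusion_system G S F" "s \<in> S" "sgrp G S P" "sgrp G S Q" "conjm G s ` P \<subseteq> Q"
  shows "(P, Q, restrict (conjm G s) P) \<in> F"
  using fusion_system_FS[OF assms(1)] assms(2-5) unfolding FS_def by blast

lemma fusion_system_incl:
  assumes "fusion_system G S F" "sgrp G S P" "sgrp G S Q" "P \<subseteq> Q"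
  shows "(P, Q, restrict id P) \<in> F"
proof -
  have "\<one> \<in> S" using assms(2) unfolding sgrp_def using subgroup.one_closed by blast
  moreover have "restrict (conjm G \<one>) P = restrict id P" "conjm G \<one> ` P \<subseteq> Q"
    using sgrp_carrier[OF assms(2)] assms(4) by (auto simp: conjm_one subset_iff)
  ultimately show ?thesis using fusion_system_conjm[OF assms(1) _ assms(2,3)] by metis
qed

lemma fusion_system_restrict:
  assumes "fusion_system G S F" "(Q, R, \<phi>) \<in> F" "sgrp G S P" "P \<subseteq> Q"
  shows "(P, R, restrict \<phi> P) \<in> F"
proof -
  have "(P, Q, restrict id P) \<in> F"
    using fusion_system_incl[OF assms(1,3) fusion_system_mor(1)[OF assms(1,2)] assms(4)] .
  moreover have "compose P \<phi> (restrict id P) = restrict \<phi> P"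
    by (auto simp: compose_def fun_eq_iff)
  ultimately show ?thesis using fusion_system_compose[OF assms(1) _ assms(2)] by metis
qed

lemma fusion_system_codomain:
  assumes "fusion_system G S F" "(P, Q, \<phi>) \<in> F" "sgrp G S R" "\<phi> ` P \<subseteq> R"
  shows "(P, R, \<phi>) \<in> F"
proof -
  have onto: "(P, \<phi> ` P, \<phi>) \<in> F" by (rule fusion_system_onto_image[OF assms(1,2)])
  have "(\<phi> ` P, R, restrict id (\<phi> ` P)) \<in> F"
    by (rule fusion_system_incl[OF assms(1) fusion_system_mor(2)[OF assms(1) onto] assms(3,4)])
  from fusion_system_compose[OF assms(1) onto this]
  have "(P, R, compose P (restrict id (\<phi> ` P)) \<phi>) \<in> F" .
  moreover have "compose P (restrict id (\<phi> ` P)) \<phi> = \<phi>"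
    using fusion_system_extensional[OF assms(1,2)]
    by (auto simp: compose_def fun_eq_iff extensional_def)
  ultimately show ?thesis by simp
qed

lemma fusion_system_Inter:
  assumes "\<F> \<noteq> {}" "\<And>F. F \<in> \<F> \<Longrightarrow> fusion_system G S F"
  shows "fusion_system G S (\<Inter>\<F>)"
proof -
  obtain F0 where F0: "F0 \<in> \<F>" using assms(1) by blast
  show ?thesis unfolding fusion_system_def
  proof (intro conjI)
    show "\<forall>(P, Q, \<phi>)\<in>\<Inter>\<F>. sgrp G S P \<and> sgrp G S Q \<and> injhom G P Q \<phi>"
      using F0 fusion_system_mor[OF assms(2)[OF F0]] by blast
    show "FS G S \<subseteq> \<Inter>\<F>" using fusion_system_FS assms(2) by blast
    show "\<forall>P Q R \<phi> \<psi>. (P, Q, \<phi>) \<in> \<Inter>\<F> \<and> (Q, R, \<psi>) \<in> \<Inter>\<F> \<longrightarrow> (P, R, compose P \<psi> \<phi>) \<in> \<Inter>\<F>"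
      using fusion_system_compose assms(2) by blast
    show "\<forall>(P, Q, \<phi>)\<in>\<Inter>\<F>. (P, \<phi> ` P, \<phi>) \<in> \<Inter>\<F> \<and>
        (\<phi> ` P, P, restrict (inv_into P \<phi>) (\<phi> ` P)) \<in> \<Inter>\<F>"
      using fusion_system_onto_image fusion_system_inv_into assms(2) by blast
  qed
qed

end

definition injhom_system :: "('g, 'b) monoid_scheme \<Rightarrow> 'g set \<Rightarrow> 'g fus" where
  "injhom_system G S = {(P, Q, \<phi>). sgrp G S P \<and> sgrp G S Q \<and> injhom G P Q \<phi>}"

context group
begin

lemma fusion_system_injhom_system:
  assumes "subgroup S G"
  shows "fusion_system G S (injhom_system G S)"
  unfolding fusion_system_def
proof (intro conjI)
  show "\<forall>(P, Q, \<phi>)\<in>injhom_system G S. sgrp G S P \<and> sgrp G S Q \<and> injhom G P Q \<phi>"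
    unfolding injhom_system_def by blast
  show "FS G S \<subseteq> injhom_system G S"
    using injhom_restrict_conjm subgroup.mem_carrier[OF assms]
    unfolding FS_def injhom_system_def sgrp_def by blast
  show "\<forall>P Q R \<phi> \<psi>. (P, Q, \<phi>) \<in> injhom_system G S \<and> (Q, R, \<psi>) \<in> injhom_system G S \<longrightarrow>
      (P, R, compose P \<psi> \<phi>) \<in> injhom_system G S"
    unfolding injhom_system_def sgrp_def using injhom_compose by blast
  show "\<forall>(P, Q, \<phi>)\<in>injhom_system G S. (P, \<phi> ` P, \<phi>) \<in> injhom_system G S \<and>
      (\<phi> ` P, P, restrict (inv_into P \<phi>) (\<phi> ` P)) \<in> injhom_system G S"
  proof (intro ballI, clarify)
    fix P Q \<phi> assume "(P, Q, \<phi>) \<in> injhom_system G S"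
    then have a: "sgrp G S P" "sgrp G S Q" "injhom G P Q \<phi>" unfolding injhom_system_def by auto
    have "sgrp G S (\<phi> ` P)"
      using injhom_image_subgroup[OF a(3)] injhom_image_subset[OF a(3)] a unfolding sgrp_def by blast
    then show "(P, \<phi> ` P, \<phi>) \<in> injhom_system G S \<and>
        (\<phi> ` P, P, restrict (inv_into P \<phi>) (\<phi> ` P)) \<in> injhom_system G S"
      using a injhom_codomain[OF a(3)] injhom_inv_into[OF a(3)]
      unfolding injhom_system_def sgrp_def by blast
  qed
qed

lemma fusion_system_completion:
  assumes "subgroup S G" "\<forall>v\<in>V. fusion_system G (Sv v) (Fv v) \<and> sgrp G S (Sv v)"
  shows "fusion_system G S (completion G S V Fv)"
  unfolding completion_def
proof (rule fusion_system_Inter)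
  have "Fv v \<subseteq> injhom_system G S" if v: "v \<in> V" for v
  proof
    fix x assume "x \<in> Fv v"
    moreover obtain P Q \<phi> where "x = (P, Q, \<phi>)" by (cases x)
    moreover have "Sv v \<subseteq> S" using assms(2) v unfolding sgrp_def by blast
    ultimately show "x \<in> injhom_system G S"
      using assms(2) v fusion_system_mor[of "Sv v" "Fv v"] sgrp_mono
      unfolding injhom_system_def by blast
  qed
  then show "{F. fusion_system G S F \<and> (\<forall>v\<in>V. Fv v \<subseteq> F)} \<noteq> {}"
    using fusion_system_injhom_system[OF assms(1)] by blast
qed simp

end

lemma completion_contains: "v \<in> V \<Longrightarrow> Fv v \<subseteq> completion G S V Fv"
  unfolding completion_def by blast

subsection \<open>Classes of morphisms\<close>

locale fusion_pair = group G for G (structure) +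
  fixes S FT Sx Fx
  assumes FT: "fusion_system G S FT" and Fx: "fusion_system G Sx Fx" and Sx: "sgrp G S Sx"
begin

lemma image_sgrp: "(P, Sx, \<alpha>) \<in> FT \<Longrightarrow> sgrp G Sx (\<alpha> ` P)"
  using fusion_system_image_sgrp[OF FT] fusion_system_image_subset[OF FT] unfolding sgrp_def by blast

lemma clsD:
  assumes "\<beta> \<in> cls FT Fx P Sx \<alpha>"
  obtains \<gamma> where "(P, Sx, \<beta>) \<in> FT" "(\<alpha> ` P, \<beta> ` P, \<gamma>) \<in> Fx" "bij_betw \<gamma> (\<alpha> ` P) (\<beta> ` P)"
    "\<beta> = compose P \<gamma> \<alpha>"
  using assms unfolding cls_def by blast

lemma clsI:
  assumes "(P, Sx, \<beta>) \<in> FT" "(\<alpha> ` P, \<beta> ` P, \<gamma>) \<in> Fx" "bij_betw \<gamma> (\<alpha> ` P) (\<beta> ` P)"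
    "\<beta> = compose P \<gamma> \<alpha>"
  shows "\<beta> \<in> cls FT Fx P Sx \<alpha>"
  using assms unfolding cls_def by blast

lemma cls_refl:
  assumes a: "(P, Sx, \<alpha>) \<in> FT" shows "\<alpha> \<in> cls FT Fx P Sx \<alpha>"
proof (rule clsI[OF a])
  have s: "sgrp G Sx (\<alpha> ` P)" by (rule image_sgrp[OF a])
  show "(\<alpha> ` P, \<alpha> ` P, restrict id (\<alpha> ` P)) \<in> Fx" using fusion_system_incl[OF Fx s s] by simp
  show "bij_betw (restrict id (\<alpha> ` P)) (\<alpha> ` P) (\<alpha> ` P)"
    by (simp add: bij_betw_def inj_on_def)
  show "\<alpha> = compose P (restrict id (\<alpha> ` P)) \<alpha>"
    using fusion_system_extensional[OF FT a] by (auto simp: compose_def fun_eq_iff extensional_def)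
qed

lemma cls_sym:
  assumes a: "(P, Sx, \<alpha>) \<in> FT" and b: "\<beta> \<in> cls FT Fx P Sx \<alpha>"
  shows "\<alpha> \<in> cls FT Fx P Sx \<beta>"
proof -
  obtain \<gamma> where g: "(\<alpha> ` P, \<beta> ` P, \<gamma>) \<in> Fx" "bij_betw \<gamma> (\<alpha> ` P) (\<beta> ` P)"
    "\<beta> = compose P \<gamma> \<alpha>" using clsD[OF b] by blast
  have im: "\<gamma> ` \<alpha> ` P = \<beta> ` P" and inj: "inj_on \<gamma> (\<alpha> ` P)" using g(2) by (simp_all add: bij_betw_def)
  let ?\<gamma>' = "restrict (inv_into (\<alpha> ` P) \<gamma>) (\<beta> ` P)"
  show ?thesis
  proof (rule clsI[OF a])
    show "(\<beta> ` P, \<alpha> ` P, ?\<gamma>') \<in> Fx" using fusion_system_inv_into[OF Fx g(1)] im by simp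
    show "bij_betw ?\<gamma>' (\<beta> ` P) (\<alpha> ` P)"
      using bij_betw_inv_into[OF g(2)] by (rule bij_betw_cong[THEN iffD1, rotated]) simp
    show "\<alpha> = compose P ?\<gamma>' \<beta>"
      using g(3) inj fusion_system_extensional[OF FT a]
      by (auto simp: compose_def fun_eq_iff extensional_def inv_into_f_f)
  qed
qed

lemma cls_trans:
  assumes b: "\<beta> \<in> cls FT Fx P Sx \<alpha>" and d: "\<delta> \<in> cls FT Fx P Sx \<beta>"
  shows "\<delta> \<in> cls FT Fx P Sx \<alpha>"
proof -
  obtain \<gamma> where g: "(\<alpha> ` P, \<beta> ` P, \<gamma>) \<in> Fx" "bij_betw \<gamma> (\<alpha> ` P) (\<beta> ` P)"
    "\<beta> = compose P \<gamma> \<alpha>" using clsD[OF b] by blast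
  obtain \<gamma>' where g': "(P, Sx, \<delta>) \<in> FT" "(\<beta> ` P, \<delta> ` P, \<gamma>') \<in> Fx"
    "bij_betw \<gamma>' (\<beta> ` P) (\<delta> ` P)" "\<delta> = compose P \<gamma>' \<beta>" using clsD[OF d] by blast
  show ?thesis
  proof (rule clsI[OF g'(1)])
    show "(\<alpha> ` P, \<delta> ` P, compose (\<alpha> ` P) \<gamma>' \<gamma>) \<in> Fx"
      by (rule fusion_system_compose[OF Fx g(1) g'(2)])
    have "bij_betw (\<gamma>' \<circ> \<gamma>) (\<alpha> ` P) (\<delta> ` P)" using g(2) g'(3) by (rule bij_betw_trans)
    then show "bij_betw (compose (\<alpha> ` P) \<gamma>' \<gamma>) (\<alpha> ` P) (\<delta> ` P)"
      by (rule bij_betw_cong[THEN iffD1, rotated]) (simp add: compose_def)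
    show "\<delta> = compose P (compose (\<alpha> ` P) \<gamma>' \<gamma>) \<alpha>"
      using g(3) g'(4) by (auto simp: compose_def fun_eq_iff)
  qed
qed

lemma cls_eq:
  assumes "(P, Sx, \<alpha>) \<in> FT" "\<beta> \<in> cls FT Fx P Sx \<alpha>"
  shows "cls FT Fx P Sx \<beta> = cls FT Fx P Sx \<alpha>"
  using cls_trans[OF assms(2)] cls_trans[OF cls_sym[OF assms]] by blast

lemma cls_eq_iff:
  assumes "(P, Sx, \<alpha>) \<in> FT" "(P, Sx, \<beta>) \<in> FT"
  shows "cls FT Fx P Sx \<beta> = cls FT Fx P Sx \<alpha> \<longleftrightarrow> \<beta> \<in> cls FT Fx P Sx \<alpha>"
  using cls_eq[OF assms(1)] cls_refl[OF assms(2)] by blast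

lemma cls_some:
  assumes "(P, Sx, \<alpha>) \<in> FT"
  shows "(SOME \<phi>. \<phi> \<in> cls FT Fx P Sx \<alpha>) \<in> cls FT Fx P Sx \<alpha>"
  by (rule someI[of "\<lambda>\<phi>. \<phi> \<in> cls FT Fx P Sx \<alpha>", OF cls_refl[OF assms]])

lemma cls_compose:
  assumes b: "\<beta> \<in> cls FT Fx P Sx \<alpha>" and \<psi>: "(P, P, \<psi>) \<in> FT" "\<psi> ` P = P"
  shows "compose P \<beta> \<psi> \<in> cls FT Fx P Sx (compose P \<alpha> \<psi>)"
proof -
  obtain \<gamma> where g: "(P, Sx, \<beta>) \<in> FT" "(\<alpha> ` P, \<beta> ` P, \<gamma>) \<in> Fx" "bij_betw \<gamma> (\<alpha> ` P) (\<beta> ` P)"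
    "\<beta> = compose P \<gamma> \<alpha>" using clsD[OF b] by blast
  have im: "compose P f \<psi> ` P = f ` P" for f
  proof -
    have "compose P f \<psi> ` P = f ` \<psi> ` P" by (auto simp: compose_def image_iff)
    then show ?thesis using \<psi>(2) by simp
  qed
  show ?thesis
  proof (rule clsI)
    show "(P, Sx, compose P \<beta> \<psi>) \<in> FT" by (rule fusion_system_compose[OF FT \<psi>(1) g(1)])
    show "(compose P \<alpha> \<psi> ` P, compose P \<beta> \<psi> ` P, \<gamma>) \<in> Fx"
      "bij_betw \<gamma> (compose P \<alpha> \<psi> ` P) (compose P \<beta> \<psi> ` P)" using g(2,3) unfolding im .
    show "compose P \<beta> \<psi> = compose P \<gamma> (compose P \<alpha> \<psi>)"
      using g(4) \<psi>(2) by (auto simp: compose_def fun_eq_iff)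
  qed
qed

lemma cls_restrict:
  assumes a: "(Q, Sx, \<alpha>) \<in> FT" and b: "\<beta> \<in> cls FT Fx Q Sx \<alpha>" and P: "sgrp G S P" "P \<subseteq> Q"
  shows "restrict \<beta> P \<in> cls FT Fx P Sx (restrict \<alpha> P)"
proof -
  obtain \<gamma> where g: "(Q, Sx, \<beta>) \<in> FT" "(\<alpha> ` Q, \<beta> ` Q, \<gamma>) \<in> Fx" "bij_betw \<gamma> (\<alpha> ` Q) (\<beta> ` Q)"
    "\<beta> = compose Q \<gamma> \<alpha>" using clsD[OF b] by blast
  have ra: "(P, Sx, restrict \<alpha> P) \<in> FT" by (rule fusion_system_restrict[OF FT a P])
  have rb: "(P, Sx, restrict \<beta> P) \<in> FT" by (rule fusion_system_restrict[OF FT g(1) P])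
  have \<beta>\<gamma>: "\<beta> x = \<gamma> (\<alpha> x)" if "x \<in> P" for x using g(4) P(2) that by (auto simp: compose_def)
  then have im: "restrict \<gamma> (\<alpha> ` P) ` \<alpha> ` P = \<beta> ` P" by (auto simp: image_iff)
  have "(\<alpha> ` P, \<beta> ` Q, restrict \<gamma> (\<alpha> ` P)) \<in> Fx"
    using fusion_system_restrict[OF Fx g(2) image_sgrp[OF ra]] P(2) by auto
  then have "(\<alpha> ` P, \<beta> ` P, restrict \<gamma> (\<alpha> ` P)) \<in> Fx"
    using fusion_system_codomain[OF Fx _ image_sgrp[OF rb]] im by (metis equalityD1 image_restrict_eq)
  moreover have "inj_on \<gamma> (\<alpha> ` P)"
    using g(3) P(2) unfolding bij_betw_def by (meson image_mono inj_on_subset)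
  then have "bij_betw (restrict \<gamma> (\<alpha> ` P)) (\<alpha> ` P) (\<beta> ` P)"
    using im by (simp add: bij_betw_def inj_on_def)
  ultimately show ?thesis
    using \<beta>\<gamma> by (intro clsI[OF rb, of _ "restrict \<gamma> (\<alpha> ` P)"]) (auto simp: compose_def fun_eq_iff)
qed

text \<open>An element g of Q acts on the classes of restrictions to P through the conjugation
  c_{\<alpha> g}, which lies in F_{S_x}(S_x).\<close>
lemma cls_restrict_conjm:
  assumes a: "(Q, Sx, \<alpha>) \<in> FT" and P: "sgrp G S P" "P \<subseteq> Q"
    and g: "g \<in> Q" and n: "conjm G g ` P = P"
  shows "compose P (restrict \<alpha> P) (restrict (conjm G g) P) \<in> cls FT Fx P Sx (restrict \<alpha> P)"
proof -
  have ra: "(P, Sx, restrict \<alpha> P) \<in> FT" by (rule fusion_system_restrict[OF FT a P])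
  have Q: "sgrp G S Q" using fusion_system_mor(1)[OF FT a] .
  have hom: "injhom G Q Sx \<alpha>" using fusion_system_mor(3)[OF FT a] .
  have sQ: "subgroup Q G" "subgroup Sx G" using Q Sx unfolding sgrp_def by auto
  have ag: "\<alpha> g \<in> Sx" using injhom_mem(1)[OF hom sQ(2) g] .
  have cj: "\<alpha> (conjm G g x) = conjm G (\<alpha> g) (\<alpha> x)" if "x \<in> P" for x
    using injhom_conjm[OF hom sQ] P(2) g that by blast
  have imc: "conjm G (\<alpha> g) ` \<alpha> ` P = \<alpha> ` P" using image_conjm_comp[where \<phi>=\<alpha>, OF cj n] .
  have c: "(\<alpha> ` P, \<alpha> ` P, restrict (conjm G (\<alpha> g)) (\<alpha> ` P)) \<in> Fx"
    using fusion_system_conjm[OF Fx ag image_sgrp[OF ra] image_sgrp[OF ra]] imc by simp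
  have eq: "compose P (restrict \<alpha> P) (restrict (conjm G g) P) =
      compose P (restrict (conjm G (\<alpha> g)) (\<alpha> ` P)) (restrict \<alpha> P)"
    using n cj by (auto simp: compose_def fun_eq_iff)
  have \<psi>: "(P, P, restrict (conjm G g) P) \<in> FT"
    using fusion_system_conjm[OF FT _ P(1) P(1)] n g Q P unfolding sgrp_def by auto
  have "compose P (restrict \<alpha> P) (restrict (conjm G g) P) ` P = (\<alpha> \<circ> conjm G g) ` P"
    using n by (intro image_cong) (auto simp: compose_def)
  then have "compose P (restrict \<alpha> P) (restrict (conjm G g) P) ` P = \<alpha> ` P"
    using n by (metis image_comp)
  then show ?thesis
    using c imc injhomD(3)[OF fusion_system_mor(3)[OF Fx c]] eq
    by (intro clsI fusion_system_compose[OF FT \<psi> ra]) (simp_all add: bij_betw_def)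
qed

end

lemma cls_FS_conjm:
  assumes "compose P \<gamma> \<psi> \<in> cls FT (FS G Sx) P Sx \<gamma>"
  shows "\<exists>s\<in>Sx. \<forall>x\<in>P. \<gamma> (\<psi> x) = conjm G s (\<gamma> x)"
proof -
  obtain c where c: "(\<gamma> ` P, compose P \<gamma> \<psi> ` P, c) \<in> FS G Sx" "compose P \<gamma> \<psi> = compose P c \<gamma>"
    using assms unfolding cls_def by blast
  obtain s where "s \<in> Sx" "c = restrict (conjm G s) (\<gamma> ` P)" using c(1) unfolding FS_def by blast
  then show ?thesis using c(2) by (metis (no_types, lifting) compose_eq image_eqI restrict_apply')
qed

lemma cls_mono:
  assumes "group G" "fusion_system G S FT" "Fx \<subseteq> Fy" "sgrp G S Sy" "Sx \<subseteq> Sy"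
    "\<beta> \<in> cls FT Fx P Sx \<alpha>"
  shows "\<beta> \<in> cls FT Fy P Sy \<alpha>"
proof -
  have "(P, Sx, \<beta>) \<in> FT" using assms(6) unfolding cls_def by blast
  then have "(P, Sy, \<beta>) \<in> FT"
    using group.fusion_system_codomain[OF assms(1,2) _ assms(4)]
      group.fusion_system_image_subset[OF assms(1,2)] assms(5) by blast
  then show ?thesis using assms(3,6) unfolding cls_def by blast
qed

subsection \<open>Paths in trees\<close>

lemma upathD:
  assumes "upath V E ends vs es"
  shows "vs \<noteq> []" "length vs = Suc (length es)" "distinct vs" "set vs \<subseteq> V" "set es \<subseteq> E"
    "\<And>i. i < length es \<Longrightarrow> ends (es ! i) = {vs ! i, vs ! Suc i}"
  using assms unfolding upath_def by auto

lemma upath_edges_distinct: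
  assumes p: "upath V E ends vs es" shows "distinct es"
proof -
  note d = upathD[OF p]
  have "es ! i \<noteq> es ! j" if ij: "i < j" "j < length es" for i j
  proof
    assume "es ! i = es ! j"
    then have "vs ! i \<in> {vs ! j, vs ! Suc j}" using d(6) ij by (metis insertI1 order.strict_trans)
    then show False using nth_eq_iff_index_eq[OF d(3)] ij d(2) by auto
  qed
  then show ?thesis by (metis distinct_conv_nth linorder_neq_iff)
qed

lemma upath_edge_at_hd:
  assumes p: "upath V E ends vs es" and e: "e \<in> set es" "hd vs \<in> ends e"
  shows "e = hd es"
proof -
  note d = upathD[OF p]
  obtain k where k: "k < length es" "es ! k = e" using e(1) by (metis in_set_conv_nth)
  have "hd vs = vs ! 0" using d(1) by (simp add: hd_conv_nth)
  then have "vs ! 0 \<in> {vs ! k, vs ! Suc k}" using d(6)[OF k(1)] k(2) e(2) by simp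
  then have "k = 0" using nth_eq_iff_index_eq[OF d(3)] k(1) d(2) by auto
  then show ?thesis using k by (simp add: hd_conv_nth)
qed

lemma upath_tl:
  assumes p: "upath V E ends vs es" and ne: "es \<noteq> []"
  shows "upath V E ends (tl vs) (tl es)"
proof -
  note d = upathD[OF p]
  obtain a r where vs: "vs = a # r" using d(1) by (cases vs) auto
  obtain e es' where es: "es = e # es'" using ne by (cases es) auto
  show ?thesis unfolding upath_def
    using d(2-5) d(6)[of "Suc _"] vs es by (auto simp: distinct_tl)
qed

lemma upath_take:
  assumes p: "upath V E ends vs es" and n: "n < length vs"
  shows "upath V E ends (take (Suc n) vs) (take n es)"
  using upathD[OF p] n set_take_subset[of n es] set_take_subset[of "Suc n" vs]
  unfolding upath_def by auto

lemma upath_rev: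
  assumes p: "upath V E ends vs es"
  shows "upath V E ends (rev vs) (rev es)"
proof -
  note d = upathD[OF p]
  have "ends (rev es ! i) = {rev vs ! i, rev vs ! Suc i}" if i: "i < length es" for i
  proof -
    let ?k = "length es - Suc i"
    have "rev vs ! i = vs ! Suc ?k" "rev vs ! Suc i = vs ! ?k" "rev es ! i = es ! ?k"
      using i d(2) by (simp_all add: rev_nth Suc_diff_Suc)
    then show ?thesis using d(6)[of ?k] i by auto
  qed
  then show ?thesis using d(1-5) unfolding upath_def by simp
qed

lemma nth_append_tl:
  assumes "xs \<noteq> []" "ys \<noteq> []" "last xs = hd ys" "k < length ys"
  shows "(xs @ tl ys) ! (length xs - 1 + k) = ys ! k"
proof (cases k)
  case 0
  then show ?thesis using assms by (simp add: nth_append last_conv_nth hd_conv_nth)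
next
  case (Suc k')
  then have "length xs \<le> length xs - 1 + k" "length xs - 1 + k - length xs = k'"
    using assms(1) by (cases xs; simp)+
  then show ?thesis using Suc assms by (simp add: nth_append nth_tl)
qed

lemma upath_append:
  assumes p1: "upath V E ends vs1 es1" and p2: "upath V E ends vs2 es2"
    and l: "last vs1 = hd vs2" and dj: "set vs1 \<inter> set (tl vs2) = {}"
  shows "upath V E ends (vs1 @ tl vs2) (es1 @ es2)"
proof -
  note d1 = upathD[OF p1] and d2 = upathD[OF p2]
  have "ends ((es1 @ es2) ! i) = {(vs1 @ tl vs2) ! i, (vs1 @ tl vs2) ! Suc i}"
    if i: "i < length (es1 @ es2)" for i
  proof (cases "i < length es1")
    case True
    then show ?thesis using d1(6)[OF True] d1(2) by (simp add: nth_append)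
  next
    case False
    define k where "k = i - length es1"
    have k: "k < length es2" "i = length vs1 - 1 + k" using i False d1(2) unfolding k_def by auto
    have "(es1 @ es2) ! i = es2 ! k" using False by (simp add: nth_append k_def)
    moreover have "(vs1 @ tl vs2) ! i = vs2 ! k" "(vs1 @ tl vs2) ! Suc i = vs2 ! Suc k"
      using nth_append_tl[OF d1(1) d2(1) l, of k] nth_append_tl[OF d1(1) d2(1) l, of "Suc k"] k d2(2)
      by simp_all
    ultimately show ?thesis using d2(6)[OF k(1)] by simp
  qed
  moreover have "set (tl vs2) \<subseteq> V" using d2(4) by (cases vs2) auto
  ultimately show ?thesis
    unfolding upath_def using d1(1-5) d2(2,3,5) dj by (simp add: distinct_tl)
qed

lemma ucycle_append:
  assumes p1: "upath V E ends vs1 es1" and p2: "upath V E ends vs2 es2"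
    and l: "last vs1 = hd vs2" and dj: "set vs1 \<inter> set (tl vs2) = {}" and len: "2 \<le> length vs1"
    and e: "e \<in> E" "e \<notin> set es1" "e \<notin> set es2" "ends e = {last vs2, hd vs1}"
  shows "ucycle V E ends (vs1 @ tl vs2) (es1 @ es2) e"
proof -
  have "last (vs1 @ tl vs2) = last vs2"
    using upathD(1)[OF p1] upathD(1)[OF p2] l by (cases vs2) auto
  then show ?thesis
    unfolding ucycle_def using upath_append[OF assms(1-4)] len e upathD(1)[OF p1] by auto
qed

lemma nth_notin_set_take:
  assumes "distinct xs" "i < length xs" shows "xs ! i \<notin> set (take i xs)"
proof -
  have "xs ! i \<in> set (drop i xs)" using assms(2) by (metis Cons_nth_drop_Suc list.set_intros(1))
  then show ?thesis using set_take_disj_set_drop_if_distinct[OF assms(1), of i i] by auto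
qed

lemma obtain_first_nth_in:
  assumes "xs \<noteq> []" "last xs \<in> A"
  obtains j where "j < length xs" "xs ! j \<in> A" "set (take j xs) \<inter> A = {}"
proof -
  have "length xs - 1 < length xs \<and> xs ! (length xs - 1) \<in> A"
    using assms by (simp add: last_conv_nth)
  then obtain j where j: "j < length xs" "xs ! j \<in> A" and jmin: "\<And>k. k < j \<Longrightarrow> xs ! k \<notin> A"
    using exists_least_iff[of "\<lambda>j. j < length xs \<and> xs ! j \<in> A"] by (metis order.strict_trans)
  moreover have "set (take j xs) \<inter> A = {}"
    using jmin j(1) by (auto simp: in_set_conv_nth)
  ultimately show thesis using that by blast
qed

text \<open>Two paths leaving a along different edges and meeting again close up to a cycle: follow
  the second path until it first hits the tail of the first, then return along the first.\<close>
lemma upath_diverge_ucycle: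
  assumes p: "upath V E ends (a # b # r) (e # er)" and p': "upath V E ends (a # b' # r') (e' # er')"
    and l: "last (b # r) = last (b' # r')" and ne: "e \<noteq> e'"
  shows "\<exists>C CE c. ucycle V E ends C CE c"
proof -
  define vs' where "vs' = a # b' # r'"
  note d = upathD[OF p] and d' = upathD[OF p'[folded vs'_def]]
  have "last vs' \<in> set (b # r)" using l last_in_set[of "b # r"] unfolding vs'_def by simp
  then obtain j where j: "j < length vs'" "vs' ! j \<in> set (b # r)"
    and jmin: "set (take j vs') \<inter> set (b # r) = {}"
    using obtain_first_nth_in[of vs'] unfolding vs'_def by blast
  have "j \<noteq> 0" using j(2) d(3) unfolding vs'_def by (cases j) auto
  obtain i where i: "i < length (b # r)" "(b # r) ! i = vs' ! j" using j(2) by (metis in_set_conv_nth)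
  define C1 where "C1 = take (Suc j) vs'"
  define P2 where "P2 = take (Suc i) (b # r)"
  have pC1: "upath V E ends C1 (take j (e' # er'))"
    unfolding C1_def using upath_take[OF p'[folded vs'_def] j(1)] .
  have "upath V E ends (b # r) er" using upath_tl[OF p] by simp
  then have pP2: "upath V E ends (rev P2) (rev (take i er))"
    unfolding P2_def using upath_rev[OF upath_take[OF _ i(1)]] by blast
  have C1: "C1 = take j vs' @ [vs' ! j]" unfolding C1_def using j(1) by (simp add: take_Suc_conv_app_nth)
  have P2: "rev P2 = vs' ! j # rev (take i (b # r))"
    unfolding P2_def take_Suc_conv_app_nth[OF i(1)] i(2) by simp
  have "distinct (b # r)" using d(3) by simp
  then have "vs' ! j \<notin> set (take i (b # r))" using nth_notin_set_take[OF _ i(1)] i(2) by simp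
  then have dj: "set C1 \<inter> set (tl (rev P2)) = {}"
    unfolding C1 P2 using jmin set_take_subset[of i "b # r"] by auto
  have "e \<notin> set (take j (e' # er'))"
    using upath_edge_at_hd[OF p'] ne d(6)[of 0] set_take_subset by fastforce
  moreover have "e \<notin> set (rev (take i er))"
    using upath_edges_distinct[OF p] set_take_subset[of i er] by auto
  moreover have "2 \<le> length C1" "hd C1 = a" "last (rev P2) = b"
    using j \<open>j \<noteq> 0\<close> unfolding C1_def P2_def vs'_def by (auto simp: last_rev)
  ultimately have "ucycle V E ends (C1 @ tl (rev P2)) (take j (e' # er') @ rev (take i er)) e"
    using ucycle_append[OF pC1 pP2 _ dj] C1 P2 d(5) d(6)[of 0] by (simp add: insert_commute)
  then show ?thesis by blast
qed

lemma upath_hd_eq_last: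
  assumes "upath V E ends vs es" "hd vs = last vs" shows "vs = [hd vs]" "es = []"
proof -
  note d = upathD[OF assms(1)]
  show "vs = [hd vs]"
  proof (cases vs)
    case (Cons a r)
    have "r = []"
    proof (rule ccontr)
      assume "r \<noteq> []"
      then have "last vs \<in> set r" using Cons by simp
      then show False using d(3) assms(2) Cons by simp
    qed
    then show ?thesis using Cons by simp
  qed (use d(1) in simp)
  then show "es = []" using d(2) by (metis length_0_conv length_Cons nat.inject)
qed

lemma acyclic_upath_unique:
  assumes acyclic: "\<not> (\<exists>C CE c. ucycle V E ends C CE c)"
  shows "upath V E ends vs es \<Longrightarrow> upath V E ends vs' es' \<Longrightarrow> hd vs = hd vs' \<Longrightarrow>
     last vs = last vs' \<Longrightarrow> vs = vs' \<and> es = es'"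
proof (induction vs arbitrary: es vs' es')
  case Nil then show ?case using upathD(1) by blast
next
  case (Cons a r)
  note p = Cons.prems(1) and p' = Cons.prems(2)
  show ?case
  proof (cases r)
    case Nil
    then have "hd vs' = last vs'" using Cons.prems(3,4) by simp
    then show ?thesis
      using upath_hd_eq_last[OF p'] upathD(2)[OF p] Nil Cons.prems(3) by simp
  next
    case (Cons b r2)
    obtain e er where es: "es = e # er" using upathD(2)[OF p] Cons by (cases es) auto
    have "vs' \<noteq> [hd vs']"
      using upath_hd_eq_last(1)[OF p] Cons.prems(3,4) Cons by (metis last_ConsL list.inject neq_Nil_conv)
    then obtain b' r2' where vs': "vs' = a # b' # r2'"
      using Cons.prems(3) upathD(1)[OF p'] by (cases vs'; cases "tl vs'") auto
    obtain e' er' where es': "es' = e' # er'" using upathD(2)[OF p'] vs' by (cases es') auto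
    have l: "last (b # r2) = last (b' # r2')" using Cons.prems(4) Cons vs' by simp
    have "e = e'"
    proof (rule ccontr)
      assume "e \<noteq> e'"
      then show False
        using upath_diverge_ucycle[OF p[unfolded Cons es] p'[unfolded vs' es'] l] acyclic by blast
    qed
    moreover have "a \<noteq> b" "a \<noteq> b'" using upathD(3)[OF p] upathD(3)[OF p'] Cons vs' by auto
    moreover have "ends e = {a, b}" "ends e' = {a, b'}"
      using upathD(6)[OF p, of 0] upathD(6)[OF p', of 0] es es' Cons vs' by simp_all
    ultimately have "b = b'" by (auto simp: doubleton_eq_iff)
    then have "r = b' # r2' \<and> er = er'"
      using Cons.IH[OF _ upath_tl[OF p', of]] upath_tl[OF p] es es' vs' l Cons by simp
    then show ?thesis using vs' es es' \<open>e = e'\<close> by simp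
  qed
qed

lemma upath_map:
  assumes p: "upath V E ends vs es" and f: "f ` V \<subseteq> V" "inj_on f V" and h: "h ` E \<subseteq> E"
    and ends_h: "\<And>e. e \<in> E \<Longrightarrow> ends (h e) = f ` ends e"
  shows "upath V E ends (map f vs) (map h es)"
proof -
  note d = upathD[OF p]
  have "ends (map h es ! i) = {map f vs ! i, map f vs ! Suc i}" if i: "i < length es" for i
  proof -
    have "es ! i \<in> E" using i d(5) by auto
    then show ?thesis using ends_h d(6)[OF i] i d(2) by simp
  qed
  then show ?thesis
    unfolding upath_def using d(1-5) f h inj_on_subset[OF f(2) d(4)] by (auto simp: distinct_map) blast+
qed

lemma utree_upath_fixed:
  assumes t: "utree V E ends" and p: "upath V E ends vs es"
    and f: "f ` V \<subseteq> V" "inj_on f V" and h: "h ` E \<subseteq> E"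
    and ends_h: "\<And>e. e \<in> E \<Longrightarrow> ends (h e) = f ` ends e"
    and fix_hd: "f (hd vs) = hd vs" and fix_last: "f (last vs) = last vs"
  shows "\<forall>e\<in>set es. h e = e"
proof -
  have "\<not> (\<exists>C CE c. ucycle V E ends C CE c)" using t unfolding utree_def by blast
  moreover have "hd (map f vs) = hd vs" "last (map f vs) = last vs"
    using upathD(1)[OF p] fix_hd fix_last by (simp_all add: hd_map last_map)
  ultimately have "map h es = es"
    using acyclic_upath_unique[OF _ upath_map[OF p f h ends_h] p] by blast
  then show ?thesis by (metis map_eq_conv map_ident)
qed

subsection \<open>Trees of fusion systems\<close>

definition conj_intertwined ::
    "('g, 'b) monoid_scheme \<Rightarrow> 'g set \<Rightarrow> 'g set \<Rightarrow> 'g set \<Rightarrow> ('g \<Rightarrow> 'g) \<Rightarrow> bool" where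
  "conj_intertwined G P Q R \<gamma> \<longleftrightarrow> (\<forall>q\<in>Q. \<exists>s\<in>R. \<forall>x\<in>P. \<gamma> (conjm G q x) = conjm G s (\<gamma> x))"

locale fusion_tree = group G for G :: "('g, 'b) monoid_scheme" (structure) +
  fixes p :: nat and S :: "'g set"
    and V :: "'v set" and E :: "'e set" and ends :: "'e \<Rightarrow> 'v set"
    and Sv :: "'v \<Rightarrow> 'g set" and Se :: "'e \<Rightarrow> 'g set"
    and Fv :: "'v \<Rightarrow> 'g fus" and Fe :: "'e \<Rightarrow> 'g fus"
    and P Q :: "'g set" and v0 :: 'v
  assumes S_sub: "subgroup S G" and S_fin: "finite S"
    and T_tree: "utree V E ends"
    and Sv_sub: "\<forall>v\<in>V. sgrp G S (Sv v)"
    and Se_sub: "\<forall>e\<in>E. sgrp G S (Se e) \<and> (\<forall>v\<in>ends e. Se e \<subseteq> Sv v)"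
    and Fv_fus: "\<forall>v\<in>V. fusion_system G (Sv v) (Fv v)"
    and Fe_fus: "\<forall>e\<in>E. fusion_system G (Se e) (Fe e) \<and> (\<forall>v\<in>ends e. Fe e \<subseteq> Fv v)"
    and v0: "v0 \<in> V" "Sv v0 = S"
    and sat: "\<forall>v\<in>V. saturated p G (Sv v) (Fv v)"
    and Fe_triv: "\<forall>e\<in>E. Fe e = FS G (Se e)"
    and Q_sub: "sgrp G S Q" and P_sub: "sgrp G S P" and PQ: "P \<subseteq> Q"
    and P_normal: "\<forall>g\<in>Q. conjm G g ` P = P"
    and P_centric: "centric G S (completion G S V Fv) P"
    and Rep_tree: "utree (rep_nodes (completion G S V Fv) Fv Sv V P)
                         (rep_nodes (completion G S V Fv) Fe Se E P)
                         (rep_ends (completion G S V Fv) Fv Sv ends P)"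
begin

abbreviation "FT \<equiv> completion G S V Fv"

lemma FT: "fusion_system G S FT"
  by (rule fusion_system_completion[OF S_sub, where Sv=Sv]) (use Sv_sub Fv_fus in blast)

lemma S_sgrp: "sgrp G S S"
  using S_sub unfolding sgrp_def by blast

lemma edge_ends:
  assumes "e \<in> E" shows "ends e \<subseteq> V" "ends e \<noteq> {}"
proof -
  have "ugraph V E ends" using T_tree unfolding utree_def by blast
  then obtain u w where "u \<in> V" "w \<in> V" "ends e = {u, w}" using assms unfolding ugraph_def by blast
  then show "ends e \<subseteq> V" "ends e \<noteq> {}" by auto
qed

lemma edge_vertex:
  assumes "e \<in> E" "v \<in> ends e"
  shows "v \<in> V" "sgrp G S (Sv v)" "sgrp G S (Se e)" "Se e \<subseteq> Sv v" "Fe e \<subseteq> Fv v"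
  using edge_ends(1)[OF assms(1)] assms Sv_sub Se_sub Fe_fus by auto

lemma mor_into_vertex:
  assumes "e \<in> E" "v \<in> ends e" "(R, Se e, \<gamma>) \<in> FT"
  shows "(R, Sv v, \<gamma>) \<in> FT"
  using fusion_system_codomain[OF FT assms(3) edge_vertex(2)[OF assms(1,2)]]
    fusion_system_image_subset[OF FT assms(3)] edge_vertex(4)[OF assms(1,2)] by blast

lemma conjm_mor:
  assumes "g \<in> Q"
  shows "(P, P, restrict (conjm G g) P) \<in> FT" "restrict (conjm G g) P ` P = P"
proof -
  have "g \<in> S" using assms Q_sub unfolding sgrp_def by blast
  then show "(P, P, restrict (conjm G g) P) \<in> FT"
    using fusion_system_conjm[OF FT _ P_sub P_sub] P_normal assms by blast
  show "restrict (conjm G g) P ` P = P" using P_normal assms by simp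
qed

lemma centric_centralizer:
  assumes "(P, R, \<alpha>) \<in> FT"
  shows "centralizer_in G S (\<alpha> ` P) = center_of G (\<alpha> ` P)"
proof -
  have "(P, S, \<alpha>) \<in> FT"
    using fusion_system_codomain[OF FT assms S_sgrp] fusion_system_image_subset[OF FT assms]
      fusion_system_mor(2)[OF FT assms] unfolding sgrp_def by blast
  then show ?thesis using P_centric unfolding centric_def Hom_def by blast
qed

text \<open>Centricity makes the centraliser of every conjugate of \<gamma> P its centre, and
  centres of isomorphic groups have the same size.\<close>
lemma centric_image_fully_centralised:
  assumes v: "v \<in> V" and \<gamma>: "(P, Sv v, \<gamma>) \<in> FT"
  shows "fully_centralised G (Sv v) (Fv v) (\<gamma> ` P)"
  unfolding fully_centralised_def
proof
  let ?X = "\<gamma> ` P"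
  have Fv: "fusion_system G (Sv v) (Fv v)" and Sv: "sgrp G S (Sv v)" using Fv_fus Sv_sub v by auto
  have Sv_S: "Sv v \<subseteq> S" using Sv unfolding sgrp_def by blast
  fix \<psi> assume "\<psi> \<in> Hom (Fv v) ?X (Sv v)"
  then have \<psi>: "(?X, Sv v, \<psi>) \<in> Fv v" unfolding Hom_def by simp
  have X: "sgrp G (Sv v) ?X" and hom: "injhom G ?X (Sv v) \<psi>"
    using fusion_system_mor[OF Fv \<psi>] by auto
  have "(?X, Sv v, \<psi>) \<in> FT" using \<psi> completion_contains[OF v] by blast
  then have "(P, Sv v, compose P \<psi> \<gamma>) \<in> FT"
    by (rule fusion_system_compose[OF FT fusion_system_onto_image[OF FT \<gamma>]])
  moreover have "compose P \<psi> \<gamma> ` P = \<psi> ` ?X" by (auto simp: compose_def image_iff)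
  ultimately have cen: "centralizer_in G S (\<psi> ` ?X) = center_of G (\<psi> ` ?X)"
    using centric_centralizer[of "Sv v" "compose P \<psi> \<gamma>"] by simp
  have "center_of G ?X \<subseteq> S" using X Sv_S unfolding center_of_def centralizer_in_def sgrp_def by blast
  then have fin: "finite (center_of G ?X)" using S_fin by (rule finite_subset)
  have "card (centralizer_in G (Sv v) (\<psi> ` ?X)) \<le> card (centralizer_in G S (\<psi> ` ?X))"
    using Sv_S S_fin unfolding centralizer_in_def by (intro card_mono) (auto intro: finite_subset)
  also have "\<dots> \<le> card (\<psi> ` center_of G ?X)"
    unfolding cen using center_of_image_subset[OF hom] X fin unfolding sgrp_def
    by (intro card_mono) auto
  also have "\<dots> \<le> card (center_of G ?X)" by (rule card_image_le[OF fin])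
  also have "\<dots> \<le> card (centralizer_in G (Sv v) ?X)"
    using X S_fin Sv_S unfolding center_of_def centralizer_in_def sgrp_def
    by (intro card_mono) (auto intro: finite_subset)
  finally show "card (centralizer_in G (Sv v) (\<psi> ` ?X)) \<le> card (centralizer_in G (Sv v) ?X)" .
qed

lemma image_subset_N_phi:
  assumes v: "v \<in> V" and \<phi>: "(Q, Sv v, \<phi>) \<in> FT"
    and \<kappa>: "(\<phi> ` P, \<gamma> ` P, \<kappa>) \<in> Fv v" "\<And>x. x \<in> P \<Longrightarrow> \<kappa> (\<phi> x) = \<gamma> x"
    and fx: "conj_intertwined G P Q (Sv v) \<gamma>"
  shows "\<phi> ` Q \<subseteq> N_phi G (Sv v) (\<phi> ` P) \<kappa>"
proof
  fix z assume "z \<in> \<phi> ` Q"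
  then obtain q where q: "q \<in> Q" "z = \<phi> q" by blast
  obtain s where s: "s \<in> Sv v" "\<And>x. x \<in> P \<Longrightarrow> \<gamma> (conjm G q x) = conjm G s (\<gamma> x)"
    using fx q(1) unfolding conj_intertwined_def by blast
  have hom: "injhom G Q (Sv v) \<phi>" using fusion_system_mor(3)[OF FT \<phi>] .
  have sQ: "subgroup Q G" "subgroup (Sv v) G" using Q_sub Sv_sub v unfolding sgrp_def by auto
  have z: "z \<in> Sv v" using injhom_mem(1)[OF hom sQ(2) q(1)] q(2) by simp
  have \<phi>q: "\<phi> (conjm G q x) = conjm G z (\<phi> x)" if "x \<in> P" for x
    using injhom_conjm[OF hom sQ] q PQ that by blast
  have Pq: "conjm G q ` P = P" using P_normal q(1) by blast
  have nz: "conjm G z ` \<phi> ` P = \<phi> ` P" using image_conjm_comp[where \<phi>=\<phi>, OF \<phi>q Pq] .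
  have ns: "conjm G s ` \<gamma> ` P = \<gamma> ` P" using image_conjm_comp[where \<phi>=\<gamma>, OF s(2) Pq] .
  have \<kappa>_im: "\<kappa> ` \<phi> ` P = \<gamma> ` P" using \<kappa>(2) by (force simp: image_iff)
  have \<kappa>_inj: "inj_on \<kappa> (\<phi> ` P)" using injhomD(3)[OF fusion_system_mor(3)[OF _ \<kappa>(1)]] Fv_fus v by blast
  have "restrict (\<lambda>y. \<kappa> (conjm G z (inv_into (\<phi> ` P) \<kappa> y))) (\<kappa> ` \<phi> ` P)
      = restrict (conjm G s) (\<gamma> ` P)"
  proof
    fix y show "restrict (\<lambda>y. \<kappa> (conjm G z (inv_into (\<phi> ` P) \<kappa> y))) (\<kappa> ` \<phi> ` P) y
        = restrict (conjm G s) (\<gamma> ` P) y"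
    proof (cases "y \<in> \<gamma> ` P")
      case True
      then obtain x where x: "x \<in> P" "y = \<gamma> x" by blast
      have "inv_into (\<phi> ` P) \<kappa> y = \<phi> x" using inv_into_f_eq[OF \<kappa>_inj _ \<kappa>(2)] x by blast
      moreover have "conjm G q x \<in> P" using Pq x(1) by blast
      then have "\<kappa> (conjm G z (\<phi> x)) = conjm G s y"
        using \<phi>q[OF x(1)] \<kappa>(2) s(2)[OF x(1)] x(2) by metis
      ultimately show ?thesis using \<kappa>_im True by simp
    qed (simp add: \<kappa>_im)
  qed
  then have "restrict (\<lambda>y. \<kappa> (conjm G z (inv_into (\<phi> ` P) \<kappa> y))) (\<kappa> ` \<phi> ` P)
      \<in> AutX G (Sv v) (\<kappa> ` \<phi> ` P)"
    unfolding \<kappa>_im AutX_def normalizer_in_def using s(1) ns by blast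
  then show "z \<in> N_phi G (Sv v) (\<phi> ` P) \<kappa>"
    unfolding N_phi_def normalizer_in_def using z nz by blast
qed

text \<open>This is where saturation of F(v) enters: the inverse of the F(v)-isomorphism relating
  \<phi>|P to \<gamma> extends to N_\<kappa>, which contains \<phi> Q.\<close>
lemma saturated_extension:
  assumes v: "v \<in> V" and \<gamma>: "(P, Sv v, \<gamma>) \<in> FT" and \<phi>: "(Q, Sv v, \<phi>) \<in> FT"
    and cls: "restrict \<phi> P \<in> cls FT (Fv v) P (Sv v) \<gamma>"
    and fx: "conj_intertwined G P Q (Sv v) \<gamma>"
  obtains \<phi>' where "(Q, Sv v, \<phi>') \<in> FT" "restrict \<phi>' P = \<gamma>"
proof -
  have Fv: "fusion_system G (Sv v) (Fv v)" and Sv: "sgrp G S (Sv v)" using Fv_fus Sv_sub v by auto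
  have Sv_S: "Sv v \<subseteq> S" and Sv_Sv: "sgrp G (Sv v) (Sv v)" using Sv unfolding sgrp_def by auto
  obtain \<chi> where \<chi>: "(\<gamma> ` P, \<phi> ` P, \<chi>) \<in> Fv v" "bij_betw \<chi> (\<gamma> ` P) (\<phi> ` P)"
    "restrict \<phi> P = compose P \<chi> \<gamma>"
    using cls unfolding cls_def by auto
  have \<phi>\<chi>: "\<phi> x = \<chi> (\<gamma> x)" if "x \<in> P" for x
    using fun_cong[OF \<chi>(3), of x] that by (simp add: compose_def)
  define \<kappa> where "\<kappa> = restrict (inv_into (\<gamma> ` P) \<chi>) (\<phi> ` P)"
  have \<kappa>: "(\<phi> ` P, \<gamma> ` P, \<kappa>) \<in> Fv v"
    using fusion_system_inv_into[OF Fv \<chi>(1)] \<chi>(2) unfolding \<kappa>_def bij_betw_def by simp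
  have \<kappa>\<phi>: "\<kappa> (\<phi> x) = \<gamma> x" if "x \<in> P" for x
    using \<chi>(2) that \<phi>\<chi>[OF that] unfolding \<kappa>_def bij_betw_def by (auto simp: inv_into_f_f)
  then have \<kappa>_im: "\<kappa> ` \<phi> ` P = \<gamma> ` P" by (force simp: image_iff)
  have "\<kappa> \<in> Hom (Fv v) (\<phi> ` P) (Sv v)"
    using fusion_system_codomain[OF Fv \<kappa> Sv_Sv] fusion_system_mor(2)[OF Fv \<kappa>]
      fusion_system_image_subset[OF Fv \<kappa>] unfolding Hom_def sgrp_def by blast
  moreover have "fully_centralised G (Sv v) (Fv v) (\<kappa> ` \<phi> ` P)"
    unfolding \<kappa>_im by (rule centric_image_fully_centralised[OF v \<gamma>])
  ultimately obtain \<psi> where \<psi>: "(N_phi G (Sv v) (\<phi> ` P) \<kappa>, Sv v, \<psi>) \<in> Fv v"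
    "restrict \<psi> (\<phi> ` P) = \<kappa>"
    using sat v unfolding saturated_def Hom_def by blast
  have "sgrp G S (N_phi G (Sv v) (\<phi> ` P) \<kappa>)"
    using sgrp_mono[OF fusion_system_mor(1)[OF Fv \<psi>(1)] Sv_S] .
  then have "(Q, N_phi G (Sv v) (\<phi> ` P) \<kappa>, \<phi>) \<in> FT"
    using fusion_system_codomain[OF FT \<phi>] image_subset_N_phi[OF v \<phi> \<kappa> \<kappa>\<phi> fx] by blast
  then have "(Q, Sv v, compose Q \<psi> \<phi>) \<in> FT"
    using fusion_system_compose[OF FT] \<psi>(1) completion_contains[OF v] by blast
  moreover have "restrict (compose Q \<psi> \<phi>) P = \<gamma>"
  proof
    fix x show "restrict (compose Q \<psi> \<phi>) P x = \<gamma> x"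
    proof (cases "x \<in> P")
      case True
      then have "\<psi> (\<phi> x) = \<kappa> (\<phi> x)" using \<psi>(2) by (metis image_eqI restrict_apply')
      then show ?thesis using True PQ \<kappa>\<phi> by (auto simp: compose_def)
    qed (use fusion_system_extensional[OF FT \<gamma>] in \<open>simp add: extensional_def\<close>)
  qed
  ultimately show thesis by (rule that)
qed

text \<open>If \<phi>' q = t, then t s^-1 centralises \<gamma> P for the s \<in> R given by the intertwining,
  hence lies in \<gamma> P \<subseteq> R by centricity of P.\<close>
lemma intertwined_extension_image_subset:
  assumes \<gamma>: "(P, R, \<gamma>) \<in> FT" and \<phi>': "(Q, T, \<phi>') \<in> FT" and res: "restrict \<phi>' P = \<gamma>"
    and fx: "conj_intertwined G P Q R \<gamma>"
  shows "\<phi>' ` Q \<subseteq> R"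
proof
  fix t assume "t \<in> \<phi>' ` Q"
  then obtain q where q: "q \<in> Q" "t = \<phi>' q" by blast
  obtain s where s: "s \<in> R" "\<And>x. x \<in> P \<Longrightarrow> \<gamma> (conjm G q x) = conjm G s (\<gamma> x)"
    using fx q(1) unfolding conj_intertwined_def by blast
  have R: "sgrp G S R" and T: "sgrp G S T" and hom: "injhom G Q T \<phi>'"
    using fusion_system_mor[OF FT \<gamma>] fusion_system_mor[OF FT \<phi>'] by auto
  have sub: "subgroup S G" "subgroup Q G" "subgroup T G" "subgroup R G"
    using S_sub Q_sub T R unfolding sgrp_def by auto
  have tT: "t \<in> T" using injhom_mem(1)[OF hom sub(3) q(1)] q(2) by simp
  have tS: "t \<in> S" and sS: "s \<in> S" using tT s(1) T R unfolding sgrp_def by auto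
  have tc: "t \<in> carrier G" and sc: "s \<in> carrier G"
    using tS sS subgroup.mem_carrier[OF sub(1)] by auto
  have \<phi>'P: "\<phi>' x = \<gamma> x" if "x \<in> P" for x using res that by (metis restrict_apply')
  have "(t \<otimes> inv s) \<otimes> y = y \<otimes> (t \<otimes> inv s)" if y: "y \<in> \<gamma> ` P" for y
  proof -
    obtain x where x: "x \<in> P" "y = \<gamma> x" using y by blast
    have Pq: "conjm G q x \<in> P" using P_normal q(1) x(1) by blast
    have "y \<in> carrier G"
      using injhom_mem(2)[OF fusion_system_mor(3)[OF FT \<gamma>] sub(4) x(1)] x(2) by simp
    moreover have "conjm G t y = conjm G s y"
    proof -
      have "conjm G t y = \<phi>' (conjm G q x)"
        using injhom_conjm[OF hom sub(2,3)] x q PQ \<phi>'P by auto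
      also have "\<dots> = conjm G s y" using \<phi>'P[OF Pq] s(2)[OF x(1)] x(2) by simp
      finally show ?thesis .
    qed
    ultimately show ?thesis using conjm_eq_imp_commute tc sc by blast
  qed
  moreover have "t \<otimes> inv s \<in> S" using tS sS sub(1) by (simp add: subgroup.m_closed subgroup.m_inv_closed)
  ultimately have "t \<otimes> inv s \<in> centralizer_in G S (\<gamma> ` P)" unfolding centralizer_in_def by blast
  then have "t \<otimes> inv s \<in> center_of G (\<gamma> ` P)" unfolding centric_centralizer[OF \<gamma>] .
  then have "t \<otimes> inv s \<in> \<gamma> ` P" unfolding center_of_def centralizer_in_def by blast
  then have "t \<otimes> inv s \<in> R" using fusion_system_image_subset[OF FT \<gamma>] by blast
  moreover have "t = (t \<otimes> inv s) \<otimes> s" using tc sc by (simp add: m_assoc)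
  ultimately show "t \<in> R" using subgroup.m_closed[OF sub(4) _ s(1)] by metis
qed

definition rep_family :: "'i set \<Rightarrow> ('i \<Rightarrow> 'g set) \<Rightarrow> ('i \<Rightarrow> 'g fus) \<Rightarrow> bool" where
  "rep_family I T F \<longleftrightarrow> (\<forall>i\<in>I. fusion_pair G S FT (T i) (F i))"

lemma rep_familyD: "rep_family I T F \<Longrightarrow> i \<in> I \<Longrightarrow> fusion_pair G S FT (T i) (F i)"
  unfolding rep_family_def by blast

lemma rep_family_V: "rep_family V Sv Fv"
  unfolding rep_family_def fusion_pair_def fusion_pair_axioms_def
  using FT Fv_fus Sv_sub is_group by blast

lemma rep_family_E: "rep_family E Se Fe"
  unfolding rep_family_def fusion_pair_def fusion_pair_axioms_def
  using FT Fe_fus Se_sub is_group by blast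

lemma rep_res_node:
  assumes f: "rep_family I T F" and i: "i \<in> I" and \<alpha>: "(Q, T i, \<alpha>) \<in> FT"
  shows "rep_res FT F T P (i, cls FT (F i) Q (T i) \<alpha>) = (i, cls FT (F i) P (T i) (restrict \<alpha> P))"
proof -
  interpret fusion_pair G S FT "T i" "F i" by (rule rep_familyD[OF f i])
  have "restrict (SOME \<phi>. \<phi> \<in> cls FT (F i) Q (T i) \<alpha>) P \<in> cls FT (F i) P (T i) (restrict \<alpha> P)"
    by (rule cls_restrict[OF \<alpha> cls_some[OF \<alpha>] P_sub PQ])
  then show ?thesis
    unfolding rep_res_def using cls_eq[OF fusion_system_restrict[OF FT \<alpha> P_sub PQ]] by simp
qed

lemma rep_act_node:
  assumes f: "rep_family I T F" and i: "i \<in> I" and \<alpha>: "(P, T i, \<alpha>) \<in> FT"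
    and \<psi>: "(P, P, \<psi>) \<in> FT" "\<psi> ` P = P"
  shows "rep_act FT F T P \<psi> (i, cls FT (F i) P (T i) \<alpha>) = (i, cls FT (F i) P (T i) (compose P \<alpha> \<psi>))"
proof -
  interpret fusion_pair G S FT "T i" "F i" by (rule rep_familyD[OF f i])
  have "compose P (SOME \<phi>. \<phi> \<in> cls FT (F i) P (T i) \<alpha>) \<psi> \<in> cls FT (F i) P (T i) (compose P \<alpha> \<psi>)"
    by (rule cls_compose[OF cls_some[OF \<alpha>] \<psi>])
  then show ?thesis
    unfolding rep_act_def using cls_eq[OF fusion_system_compose[OF FT \<psi>(1) \<alpha>]] by simp
qed

lemma rep_act_conjm_node:
  assumes f: "rep_family I T F" and i: "i \<in> I" and \<alpha>: "(P, T i, \<alpha>) \<in> FT" and g: "g \<in> Q"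
  shows "rep_act FT F T P (restrict (conjm G g) P) (i, cls FT (F i) P (T i) \<alpha>)
    = (i, cls FT (F i) P (T i) (compose P \<alpha> (restrict (conjm G g) P)))"
    "(P, T i, compose P \<alpha> (restrict (conjm G g) P)) \<in> FT"
  using rep_act_node[OF f i \<alpha> conjm_mor[OF g]] fusion_system_compose[OF FT conjm_mor(1)[OF g] \<alpha>]
  by simp_all

lemma rep_res_fixed:
  assumes f: "rep_family I T F" and x: "x \<in> rep_nodes FT F T I Q"
  shows "rep_res FT F T P x \<in> rep_fixed FT F T I P (AutQ G Q P)"
proof -
  obtain i \<alpha> where x: "x = (i, cls FT (F i) Q (T i) \<alpha>)" "i \<in> I" "(Q, T i, \<alpha>) \<in> FT"
    using x unfolding rep_nodes_def by blast
  interpret fusion_pair G S FT "T i" "F i" by (rule rep_familyD[OF f x(2)])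
  have \<alpha>P: "(P, T i, restrict \<alpha> P) \<in> FT" by (rule fusion_system_restrict[OF FT x(3) P_sub PQ])
  have res: "rep_res FT F T P x = (i, cls FT (F i) P (T i) (restrict \<alpha> P))"
    using rep_res_node[OF f x(2,3)] x(1) by simp
  show ?thesis unfolding rep_fixed_def
  proof (intro CollectI conjI ballI)
    show "rep_res FT F T P x \<in> rep_nodes FT F T I P" unfolding res rep_nodes_def using x(2) \<alpha>P by blast
    fix \<psi> assume "\<psi> \<in> AutQ G Q P"
    then obtain g where g: "g \<in> Q" "\<psi> = restrict (conjm G g) P" unfolding AutQ_def by blast
    have "compose P (restrict \<alpha> P) \<psi> \<in> cls FT (F i) P (T i) (restrict \<alpha> P)"
      using cls_restrict_conjm[OF x(3) P_sub PQ g(1)] P_normal g by blast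
    then show "rep_act FT F T P \<psi> (rep_res FT F T P x) = rep_res FT F T P x"
      unfolding res g(2) rep_act_conjm_node(1)[OF f x(2) \<alpha>P g(1)]
      using cls_eq[OF \<alpha>P] g(2) by simp
  qed
qed

lemma rep_act_closed:
  assumes f: "rep_family I T F" and y: "y \<in> rep_nodes FT F T I P" and g: "g \<in> Q"
  shows "rep_act FT F T P (restrict (conjm G g) P) y \<in> rep_nodes FT F T I P"
proof -
  obtain i \<alpha> where y: "y = (i, cls FT (F i) P (T i) \<alpha>)" "i \<in> I" "(P, T i, \<alpha>) \<in> FT"
    using y unfolding rep_nodes_def by blast
  then show ?thesis using rep_act_conjm_node[OF f y(2,3) g] unfolding rep_nodes_def by blast
qed

lemma rep_act_inv:
  assumes f: "rep_family I T F" and y: "y \<in> rep_nodes FT F T I P" and g: "g \<in> Q"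
  shows "rep_act FT F T P (restrict (conjm G (inv g)) P) (rep_act FT F T P (restrict (conjm G g) P) y) = y"
proof -
  obtain i \<alpha> where y: "y = (i, cls FT (F i) P (T i) \<alpha>)" "i \<in> I" "(P, T i, \<alpha>) \<in> FT"
    using y unfolding rep_nodes_def by blast
  have sQ: "subgroup Q G" using Q_sub unfolding sgrp_def by blast
  have ig: "inv g \<in> Q" and gc: "g \<in> carrier G"
    using subgroup.m_inv_closed[OF sQ g] subgroup.mem_carrier[OF sQ g] .
  note act = rep_act_conjm_node[OF f y(2,3) g]
  have "compose P (compose P \<alpha> (restrict (conjm G g) P)) (restrict (conjm G (inv g)) P) = \<alpha>"
  proof
    fix x show "compose P (compose P \<alpha> (restrict (conjm G g) P)) (restrict (conjm G (inv g)) P) x = \<alpha> x"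
    proof (cases "x \<in> P")
      case True
      moreover have "conjm G (inv g) x \<in> P" using P_normal ig True by blast
      moreover have "conjm G g (conjm G (inv g) x) = x"
        using conjm_conjm_inv gc True sgrp_carrier[OF P_sub] by blast
      ultimately show ?thesis by (simp add: compose_def)
    qed (use fusion_system_extensional[OF FT y(3)] in \<open>simp add: compose_def extensional_def\<close>)
  qed
  then show ?thesis using act rep_act_conjm_node(1)[OF f y(2) act(2) ig] y(1) by simp
qed

lemma rep_ends_node:
  assumes e: "e \<in> E" and \<gamma>: "(P, Se e, \<gamma>) \<in> FT"
  shows "rep_ends FT Fv Sv ends P (e, cls FT (Fe e) P (Se e) \<gamma>)
    = (\<lambda>v. (v, cls FT (Fv v) P (Sv v) \<gamma>)) ` ends e"
proof -
  interpret fusion_pair G S FT "Se e" "Fe e" by (rule rep_familyD[OF rep_family_E e])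
  let ?\<beta> = "SOME \<phi>. \<phi> \<in> cls FT (Fe e) P (Se e) \<gamma>"
  have "cls FT (Fv v) P (Sv v) ?\<beta> = cls FT (Fv v) P (Sv v) \<gamma>" if v: "v \<in> ends e" for v
  proof -
    interpret v: fusion_pair G S FT "Sv v" "Fv v"
      by (rule rep_familyD[OF rep_family_V edge_vertex(1)[OF e v]])
    have "?\<beta> \<in> cls FT (Fv v) P (Sv v) \<gamma>"
      using cls_mono[OF is_group FT edge_vertex(5,2,4)[OF e v] cls_some[OF \<gamma>]] .
    then show ?thesis by (rule v.cls_eq[OF mor_into_vertex[OF e v \<gamma>]])
  qed
  then show ?thesis unfolding rep_ends_def by (auto intro!: image_cong)
qed

lemma rep_ends_act:
  assumes ed: "ed \<in> rep_nodes FT Fe Se E P" and g: "g \<in> Q"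
  shows "rep_ends FT Fv Sv ends P (rep_act FT Fe Se P (restrict (conjm G g) P) ed)
    = rep_act FT Fv Sv P (restrict (conjm G g) P) ` rep_ends FT Fv Sv ends P ed"
proof -
  obtain e \<gamma> where e: "ed = (e, cls FT (Fe e) P (Se e) \<gamma>)" "e \<in> E" "(P, Se e, \<gamma>) \<in> FT"
    using ed unfolding rep_nodes_def by blast
  note act = rep_act_conjm_node[OF rep_family_E e(2,3) g]
  have "rep_act FT Fv Sv P (restrict (conjm G g) P) (v, cls FT (Fv v) P (Sv v) \<gamma>) =
      (v, cls FT (Fv v) P (Sv v) (compose P \<gamma> (restrict (conjm G g) P)))" if "v \<in> ends e" for v
    using rep_act_conjm_node(1)[OF rep_family_V edge_vertex(1)[OF e(2) that]
        mor_into_vertex[OF e(2) that e(3)] g] .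
  then show ?thesis
    unfolding e(1) act(1) rep_ends_node[OF e(2,3)] rep_ends_node[OF e(2) act(2)] image_image
    by (auto intro!: image_cong)
qed

abbreviation "RepV \<equiv> rep_nodes FT Fv Sv V P"
abbreviation "RepE \<equiv> rep_nodes FT Fe Se E P"
abbreviation "RepEnds \<equiv> rep_ends FT Fv Sv ends P"
abbreviation "FixV \<equiv> rep_fixed FT Fv Sv V P (AutQ G Q P)"
abbreviation "FixE \<equiv> rep_fixed FT Fe Se E P (AutQ G Q P)"
abbreviation "ResV \<equiv> rep_res FT Fv Sv P ` rep_nodes FT Fv Sv V Q"
abbreviation "ResE \<equiv> rep_res FT Fe Se P ` rep_nodes FT Fe Se E Q"

text \<open>Hypothesis (b) enters here: F(e)-isomorphisms are conjugations by elements of S(e).\<close>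
lemma fixed_edge_intertwined:
  assumes ed: "(e, cls FT (Fe e) P (Se e) \<gamma>) \<in> FixE" and e: "e \<in> E" "(P, Se e, \<gamma>) \<in> FT"
  shows "conj_intertwined G P Q (Se e) \<gamma>"
  unfolding conj_intertwined_def
proof
  interpret fusion_pair G S FT "Se e" "Fe e" by (rule rep_familyD[OF rep_family_E e(1)])
  fix q assume q: "q \<in> Q"
  note act = rep_act_conjm_node[OF rep_family_E e q]
  have "restrict (conjm G q) P \<in> AutQ G Q P" unfolding AutQ_def using q by blast
  then have "cls FT (Fe e) P (Se e) (compose P \<gamma> (restrict (conjm G q) P)) = cls FT (Fe e) P (Se e) \<gamma>"
    using ed act(1) unfolding rep_fixed_def by auto
  then have "compose P \<gamma> (restrict (conjm G q) P) \<in> cls FT (FS G (Se e)) P (Se e) \<gamma>"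
    using cls_eq_iff[OF e(2) act(2)] Fe_triv e(1) by simp
  then show "\<exists>s\<in>Se e. \<forall>x\<in>P. \<gamma> (conjm G q x) = conjm G s (\<gamma> x)"
    using cls_FS_conjm by fastforce
qed

lemma fixed_edge_extension:
  assumes ed: "(e, cls FT (Fe e) P (Se e) \<gamma>) \<in> FixE" and e: "e \<in> E" "(P, Se e, \<gamma>) \<in> FT"
    and v: "v \<in> ends e" and u: "(v, cls FT (Fv v) P (Sv v) \<gamma>) \<in> ResV"
  obtains \<phi>' where "(Q, Se e, \<phi>') \<in> FT" "restrict \<phi>' P = \<gamma>"
proof -
  note ev = edge_vertex[OF e(1) v]
  interpret fusion_pair G S FT "Sv v" "Fv v" by (rule rep_familyD[OF rep_family_V ev(1)])
  obtain v' \<phi> where \<phi>: "v' \<in> V" "(Q, Sv v', \<phi>) \<in> FT"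
    "(v, cls FT (Fv v) P (Sv v) \<gamma>) = rep_res FT Fv Sv P (v', cls FT (Fv v') Q (Sv v') \<phi>)"
    using u unfolding rep_nodes_def by blast
  then have \<phi>v: "(Q, Sv v, \<phi>) \<in> FT" and "cls FT (Fv v) P (Sv v) (restrict \<phi> P) = cls FT (Fv v) P (Sv v) \<gamma>"
    using rep_res_node[OF rep_family_V \<phi>(1,2)] by auto
  then have cls: "restrict \<phi> P \<in> cls FT (Fv v) P (Sv v) \<gamma>"
    using cls_eq_iff[OF mor_into_vertex[OF e(1) v e(2)] fusion_system_restrict[OF FT _ P_sub PQ]]
    by blast
  have fx: "conj_intertwined G P Q (Se e) \<gamma>" by (rule fixed_edge_intertwined[OF ed e])
  then have "conj_intertwined G P Q (Sv v) \<gamma>" using ev(4) unfolding conj_intertwined_def by blast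
  then obtain \<phi>' where \<phi>': "(Q, Sv v, \<phi>') \<in> FT" "restrict \<phi>' P = \<gamma>"
    using saturated_extension[OF ev(1) mor_into_vertex[OF e(1) v e(2)] \<phi>v cls] by blast
  have "(Q, Se e, \<phi>') \<in> FT"
    using fusion_system_codomain[OF FT \<phi>'(1) ev(3)]
      intertwined_extension_image_subset[OF e(2) \<phi>' fx] .
  then show thesis using \<phi>'(2) by (rule that)
qed

lemma fixed_edge_lift:
  assumes ed: "ed \<in> FixE" and u: "u \<in> RepEnds ed" "u \<in> ResV" and w: "w \<in> RepEnds ed"
  shows "w \<in> ResV" "ed \<in> ResE"
proof -
  obtain e \<gamma> where e: "ed = (e, cls FT (Fe e) P (Se e) \<gamma>)" "e \<in> E" "(P, Se e, \<gamma>) \<in> FT"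
    using ed unfolding rep_fixed_def rep_nodes_def by blast
  note ends_ed = rep_ends_node[OF e(2,3), folded e(1)]
  obtain v where v: "v \<in> ends e" "u = (v, cls FT (Fv v) P (Sv v) \<gamma>)" using u(1) ends_ed by blast
  obtain w' where w': "w' \<in> ends e" "w = (w', cls FT (Fv w') P (Sv w') \<gamma>)" using w ends_ed by blast
  have "(v, cls FT (Fv v) P (Sv v) \<gamma>) \<in> ResV" using u(2) v(2) by simp
  then obtain \<phi>' where \<phi>': "(Q, Se e, \<phi>') \<in> FT" "restrict \<phi>' P = \<gamma>"
    using fixed_edge_extension[OF ed[unfolded e(1)] e(2,3) v(1)] by blast
  have "(e, cls FT (Fe e) Q (Se e) \<phi>') \<in> rep_nodes FT Fe Se E Q"
    unfolding rep_nodes_def using e(2) \<phi>'(1) by blast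
  moreover have "rep_res FT Fe Se P (e, cls FT (Fe e) Q (Se e) \<phi>') = ed"
    using rep_res_node[OF rep_family_E e(2) \<phi>'(1)] \<phi>'(2) e(1) by simp
  ultimately show "ed \<in> ResE" by (metis image_eqI)
  have \<phi>'w: "(Q, Sv w', \<phi>') \<in> FT" by (rule mor_into_vertex[OF e(2) w'(1) \<phi>'(1)])
  then have "(w', cls FT (Fv w') Q (Sv w') \<phi>') \<in> rep_nodes FT Fv Sv V Q"
    unfolding rep_nodes_def using edge_vertex(1)[OF e(2) w'(1)] by blast
  moreover have "rep_res FT Fv Sv P (w', cls FT (Fv w') Q (Sv w') \<phi>') = w"
    using rep_res_node[OF rep_family_V edge_vertex(1)[OF e(2) w'(1)] \<phi>'w] \<phi>'(2) w'(2) by simp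
  ultimately show "w \<in> ResV" by (metis image_eqI)
qed

text \<open>Aut_Q(P) acts on the tree Rep(P) by graph automorphisms, so it fixes the path between
  two fixed vertices.\<close>
lemma rep_path_edges_fixed:
  assumes pth: "upath RepV RepE RepEnds vl el" and fix_hd: "hd vl \<in> FixV" and fix_last: "last vl \<in> FixV"
  shows "set el \<subseteq> FixE"
proof
  fix ed assume ed: "ed \<in> set el"
  have "rep_act FT Fe Se P \<psi> ed = ed" if \<psi>: "\<psi> \<in> AutQ G Q P" for \<psi>
  proof -
    obtain g where g: "g \<in> Q" "\<psi> = restrict (conjm G g) P" using \<psi> unfolding AutQ_def by blast
    have sQ: "subgroup Q G" using Q_sub unfolding sgrp_def by blast
    have "rep_act FT Fv Sv P \<psi> ` RepV \<subseteq> RepV" "rep_act FT Fe Se P \<psi> ` RepE \<subseteq> RepE"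
      using rep_act_closed[OF rep_family_V _ g(1)] rep_act_closed[OF rep_family_E _ g(1)] g(2) by auto
    moreover have "inj_on (rep_act FT Fv Sv P \<psi>) RepV"
      using rep_act_inv[OF rep_family_V _ g(1)] g(2) by (metis inj_on_inverseI)
    moreover have "rep_act FT Fv Sv P \<psi> (hd vl) = hd vl" "rep_act FT Fv Sv P \<psi> (last vl) = last vl"
      using fix_hd fix_last \<psi> unfolding rep_fixed_def by blast+
    ultimately show ?thesis
      using utree_upath_fixed[OF Rep_tree pth] rep_ends_act[OF _ g(1)] g(2) ed by blast
  qed
  then show "ed \<in> FixE" unfolding rep_fixed_def using upathD(5)[OF pth] ed by blast
qed

lemma fixed_vertex_in_image:
  assumes x: "x \<in> FixV"
  shows "x \<in> ResV"
proof -
  have "Q \<subseteq> Sv v0" using Q_sub v0 unfolding sgrp_def by blast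
  then have "(Q, Sv v0, restrict id Q) \<in> FT"
    using fusion_system_incl[OF FT Q_sub] v0 S_sgrp by simp
  then have b: "(v0, cls FT (Fv v0) Q (Sv v0) (restrict id Q)) \<in> rep_nodes FT Fv Sv V Q"
    unfolding rep_nodes_def using v0(1) by blast
  define b where "b = rep_res FT Fv Sv P (v0, cls FT (Fv v0) Q (Sv v0) (restrict id Q))"
  have bRes: "b \<in> ResV" unfolding b_def using b by blast
  have bFix: "b \<in> FixV" unfolding b_def by (rule rep_res_fixed[OF rep_family_V b])
  then obtain vl el where pth: "upath RepV RepE RepEnds vl el" "hd vl = b" "last vl = x"
    using Rep_tree x unfolding utree_def uconnected_def rep_fixed_def by blast
  note d = upathD[OF pth(1)]
  have fixed: "set el \<subseteq> FixE" using rep_path_edges_fixed[OF pth(1)] pth(2,3) bFix x by simp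
  have "vl ! k \<in> ResV" if "k \<le> length el" for k
    using that
  proof (induction k)
    case 0 then show ?case using bRes pth(2) d(1) by (simp add: hd_conv_nth)
  next
    case (Suc k)
    then have "el ! k \<in> FixE" "RepEnds (el ! k) = {vl ! k, vl ! Suc k}"
      using fixed d(6) by auto
    then show ?case using fixed_edge_lift(1)[of "el ! k" "vl ! k" "vl ! Suc k"] Suc by simp
  qed
  moreover have "x = vl ! length el" using pth(3) d(1,2) by (simp add: last_conv_nth)
  ultimately show ?thesis by simp
qed

lemma fixed_edge_in_image:
  assumes ed: "ed \<in> FixE"
  shows "ed \<in> ResE"
proof -
  obtain e \<gamma> where e: "ed = (e, cls FT (Fe e) P (Se e) \<gamma>)" "e \<in> E" "(P, Se e, \<gamma>) \<in> FT"
    using ed unfolding rep_fixed_def rep_nodes_def by blast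
  obtain v where v: "v \<in> ends e" using edge_ends(2)[OF e(2)] by blast
  note ev = edge_vertex[OF e(2) v]
  interpret fusion_pair G S FT "Sv v" "Fv v" by (rule rep_familyD[OF rep_family_V ev(1)])
  define u where "u = (v, cls FT (Fv v) P (Sv v) \<gamma>)"
  have u: "u \<in> RepEnds ed" unfolding u_def using rep_ends_node[OF e(2,3)] e(1) v by simp
  have \<gamma>v: "(P, Sv v, \<gamma>) \<in> FT" by (rule mor_into_vertex[OF e(2) v e(3)])
  have "u \<in> FixV" unfolding rep_fixed_def
  proof (intro CollectI conjI ballI)
    show "u \<in> RepV" unfolding u_def rep_nodes_def using ev(1) \<gamma>v by blast
    fix \<psi> assume "\<psi> \<in> AutQ G Q P"
    then obtain g where g: "g \<in> Q" "\<psi> = restrict (conjm G g) P" unfolding AutQ_def by blast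
    note act_e = rep_act_conjm_node[OF rep_family_E e(2,3) g(1)]
    have "cls FT (Fe e) P (Se e) (compose P \<gamma> \<psi>) = cls FT (Fe e) P (Se e) \<gamma>"
      using ed \<open>\<psi> \<in> AutQ G Q P\<close> act_e(1) e(1) g(2) unfolding rep_fixed_def by auto
    then have "compose P \<gamma> \<psi> \<in> cls FT (Fe e) P (Se e) \<gamma>"
      using fusion_pair.cls_eq_iff[OF rep_familyD[OF rep_family_E e(2)] e(3) act_e(2)] g(2) by simp
    then have "compose P \<gamma> \<psi> \<in> cls FT (Fv v) P (Sv v) \<gamma>"
      by (rule cls_mono[OF is_group FT ev(5,2,4)])
    then show "rep_act FT Fv Sv P \<psi> u = u"
      unfolding u_def g(2) rep_act_conjm_node(1)[OF rep_family_V ev(1) \<gamma>v g(1)]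
      using cls_eq[OF \<gamma>v] g(2) by simp
  qed
  then show ?thesis using fixed_edge_lift(2)[OF ed u fixed_vertex_in_image u] by blast
qed

theorem rep_res_image_eq_fixed: "ResV = FixV \<and> ResE = FixE"
  using rep_res_fixed[OF rep_family_V] rep_res_fixed[OF rep_family_E]
    fixed_vertex_in_image fixed_edge_in_image by blast

end

theorem proposition4p2:
  fixes G :: "('g, 'b) monoid_scheme" and p :: nat and S :: "'g set"
    and V :: "'v set" and E :: "'e set" and ends :: "'e \<Rightarrow> 'v set"
    and Sv :: "'v \<Rightarrow> 'g set" and Se :: "'e \<Rightarrow> 'g set"
    and Fv :: "'v \<Rightarrow> 'g fus" and Fe :: "'e \<Rightarrow> 'g fus"
    and P Q :: "'g set"
  assumes grp: "group G" and prime: "Factorial_Ring.prime p"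
    and S_sub: "subgroup S G" and S_fin: "finite S" and S_p: "\<exists>n. card S = p ^ n"
    and T_fin: "finite V" "finite E" and T_tree: "utree V E ends"
    and Sv_sub: "\<forall>v\<in>V. sgrp G S (Sv v)"
    and Se_sub: "\<forall>e\<in>E. sgrp G S (Se e) \<and> (\<forall>v\<in>ends e. Se e \<subseteq> Sv v)"
    and Fv_fus: "\<forall>v\<in>V. fusion_system G (Sv v) (Fv v)"
    and Fe_fus: "\<forall>e\<in>E. fusion_system G (Se e) (Fe e) \<and> (\<forall>v\<in>ends e. Fe e \<subseteq> Fv v)"
    and H: "\<exists>vs\<in>V. Sv vs = S \<and>
              (\<forall>v\<in>V - {vs}. \<exists>us es. upath V E ends us es \<and> hd us = v \<and> last us = vs \<and>
                  Se (hd es) = Sv v)"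
    and sat: "\<forall>v\<in>V. saturated p G (Sv v) (Fv v)"
    and Fe_triv: "\<forall>e\<in>E. Fe e = FS G (Se e)"
    and Q_sub: "sgrp G S Q" and P_sub: "sgrp G S P" and PQ: "P \<subseteq> Q"
    and P_normal: "\<forall>g\<in>Q. conjm G g ` P = P"
    and P_centric: "centric G S (completion G S V Fv) P"
    and Rep_tree: "utree (rep_nodes (completion G S V Fv) Fv Sv V P)
                         (rep_nodes (completion G S V Fv) Fe Se E P)
                         (rep_ends (completion G S V Fv) Fv Sv ends P)"
  shows "rep_res (completion G S V Fv) Fv Sv P ` rep_nodes (completion G S V Fv) Fv Sv V Q
           = rep_fixed (completion G S V Fv) Fv Sv V P (AutQ G Q P)
       \<and> rep_res (completion G S V Fv) Fe Se P ` rep_nodes (completion G S V Fv) Fe Se E Q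
           = rep_fixed (completion G S V Fv) Fe Se E P (AutQ G Q P)"
proof -
  obtain v0 where v0: "v0 \<in> V" "Sv v0 = S" using H by blast
  interpret fusion_tree G p S V E ends Sv Se Fv Fe P Q v0
    by (intro fusion_tree.intro fusion_tree_axioms.intro grp)
      (fact S_sub S_fin T_tree Sv_sub Se_sub Fv_fus Fe_fus v0 sat Fe_triv
        Q_sub P_sub PQ P_normal P_centric Rep_tree)+
  show ?thesis by (rule rep_res_image_eq_fixed)
qed

end
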